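(* Under the hypotheses of Theorem 1 (i.e., $(\mathbf{A},\mathbf{C})$ observable and $\{\mathcal{G}[k]\}$ satisfying the joint strong-connectivity assumption with parameter $T$), there exist observer gains $\mathbf{L}_1,\dots,\mathbf{L}_N$ (namely, any gains such that each $\mathbf{A}_{jj}-\mathbf{L}_j\mathbf{C}_{jj}$ is nilpotent) such that, when every node runs the freshness-index algorithm, for all initial states and all initial estimates, $\hat{\mathbf{z}}_i[k]=\mathbf{z}[k]$ (equivalently $\hat{\mathbf{x}}_i[k]=\mathbf{T}\hat{\mathbf{z}}_i[k]=\mathbf{x}[k]$) for every $i\in\mathcal{V}$ and every $k\ge n+2N(N-1)T$.
   Context: Graphs. Nodes $\mathcal{V}=\{1,\dots,N\}$. At each time $k\in\mathbb{N}=\{0,1,2,\dots\}$ there is a directed graph $\mathcal{G}[k]=(\mathcal{V},\mathcal{E}[k])$; $(i,j)\in\mathcal{E}[k]$ means node $i$ can send information to node $j$ at time $k$. $\mathcal{N}_i[k]=\{l\neq i:(l,i)\in\mathcal{E}[k]\}$ is the set of neighbors of $i$ at time $k$. The union graph over an interval of times has vertex set $\mathcal{V}$ and edge set the union of the edge sets over that interval. Joint strong-connectivity assumption: there is $T\in\mathbb{N}_+=\{1,2,\dots\}$ such that for every $k\in\mathbb{N}$ the union graph over $[kT,(k+1)T)$ is strongly connected. System. $\mathbf{x}[k+1]=\mathbf{A}\mathbf{x}[k]$, $\mathbf{y}_i[k]=\mathbf{C}_i\mathbf{x}[k]$, $\mathbf{A}\in\mathbb{R}^{n\times n}$, $\mathbf{C}=[\mathbf{C}_1^T\cdots\mathbf{C}_N^T]^T$.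 Since $(\mathbf{A},\mathbf{C})$ is observable, there is an invertible $\mathbf{T}$ (fixed throughout) such that with $\mathbf{x}[k]=\mathbf{T}\mathbf{z}[k]$ one has $\mathbf{z}[k+1]=\bar{\mathbf{A}}\mathbf{z}[k]$, $\mathbf{y}_i[k]=\mathbf{C}_i\mathbf{T}\mathbf{z}[k]$, where $\mathbf{z}=[\mathbf{z}^{(1)T}\cdots\mathbf{z}^{(N)T}]^T$ with $\mathbf{z}^{(j)}\in\mathbb{R}^{n_j}$ ("substate $j$"), $\sum_j n_j=n$, $\bar{\mathbf{A}}=\mathbf{T}^{-1}\mathbf{A}\mathbf{T}$ is block lower triangular with blocks $\mathbf{A}_{jq}$ ($\mathbf{A}_{jq}=0$ for $q>j$), so $\mathbf{z}^{(j)}[k+1]=\mathbf{A}_{jj}\mathbf{z}^{(j)}[k]+\sum_{q=1}^{j-1}\mathbf{A}_{jq}\mathbf{z}^{(q)}[k]$; and $\mathbf{C}_i\mathbf{T}=[\mathbf{C}_{i1}\ \cdots\ \mathbf{C}_{ii}\ 0\ \cdots\ 0]$, so $\mathbf{y}_i[k]=\sum_{q=1}^{i}\mathbf{C}_{iq}\mathbf{z}^{(q)}[k]$; moreover each pair $(\mathbf{A}_{jj},\mathbf{C}_{jj})$ is observable. Node $j$ is called the source node of substate $j$. Freshness indices. For each substate $j$ and node $i$, node $i$ keeps $\tau^{(j)}_i[k]\in\{\omega\}\cup\mathbb{N}$, where $\omega$ is a special symbol. Initialization: $\tau^{(j)}_j[0]=0$, $\tau^{(j)}_i[0]=\omega$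 for $i\neq j$. The source keeps $\tau^{(j)}_j[k]=0$ for all $k$. For $i\neq j$, let $\mathcal{M}^{(j)}_i[k]=\{l\in\mathcal{N}_i[k]:\tau^{(j)}_l[k]\neq\omega\}$. Case 1, $\tau^{(j)}_i[k]=\omega$: if $\mathcal{M}^{(j)}_i[k]\neq\emptyset$, let $u$ be any minimizer of $\tau^{(j)}_l[k]$ over $l\in\mathcal{M}^{(j)}_i[k]$, set $\tau^{(j)}_i[k+1]=\tau^{(j)}_u[k]+1$ and perform an "adopt-$u$" estimate update; otherwise set $\tau^{(j)}_i[k+1]=\omega$ and perform an "open-loop" estimate update. Case 2, $\tau^{(j)}_i[k]\neq\omega$: let $\mathcal{F}^{(j)}_i[k]=\{l\in\mathcal{M}^{(j)}_i[k]:\tau^{(j)}_l[k]<\tau^{(j)}_i[k]\}$; if nonempty, let $u$ be any minimizer of $\tau^{(j)}_l[k]$ over $\mathcal{F}^{(j)}_i[k]$, set $\tau^{(j)}_i[k+1]=\tau^{(j)}_u[k]+1$ and perform an adopt-$u$ update; otherwise set $\tau^{(j)}_i[k+1]=\tau^{(j)}_i[k]+1$ and perform an open-loop update. Estimates. Each node $i$ keeps $\hat{\mathbf{z}}_i[k]=[\hat{\mathbf{z}}^{(1)T}_i[k]\cdots\hat{\mathbf{z}}^{(N)T}_i[k]]^T$, with arbitrary initial value. Source update for substate $j$: $\hat{\mathbf{z}}^{(j)}_j[k+1]=(\mathbf{A}_{jj}-\mathbf{L}_j\mathbf{C}_{jj})\hat{\mathbf{z}}^{(j)}_j[k]+\sum_{q=1}^{j-1}(\mathbf{A}_{jq}-\mathbf{L}_j\mathbf{C}_{jq})\hat{\mathbf{z}}^{(q)}_j[k]+\mathbf{L}_j\mathbf{y}_j[k]$.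 Adopt-$u$ update at node $i\ne j$: $\hat{\mathbf{z}}^{(j)}_i[k+1]=\mathbf{A}_{jj}\hat{\mathbf{z}}^{(j)}_u[k]+\sum_{q=1}^{j-1}\mathbf{A}_{jq}\hat{\mathbf{z}}^{(q)}_i[k]$. Open-loop update at node $i\neq j$: $\hat{\mathbf{z}}^{(j)}_i[k+1]=\mathbf{A}_{jj}\hat{\mathbf{z}}^{(j)}_i[k]+\sum_{q=1}^{j-1}\mathbf{A}_{jq}\hat{\mathbf{z}}^{(q)}_i[k]$. These updates are carried out for every substate $j$ at every time $k$. *)

theory Defs
  imports "Jordan_Normal_Form.Matrix"
begin

(* Nodes and substates are indexed by 0..<N (the paper uses 1..N). *)

definition vsum :: "nat \<Rightarrow> (nat \<Rightarrow> real vec) \<Rightarrow> nat \<Rightarrow> real vec" where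
  "vsum d f m = foldr (\<lambda>q acc. f q + acc) [0..<m] (0\<^sub>v d)"

(* observability of the pair (A, C), A of size d x d: the observability matrix
   [C; C A; ...; C A^(d-1)] has trivial kernel (i.e. full column rank d) *)
definition observable_pair :: "real mat \<Rightarrow> real mat \<Rightarrow> nat \<Rightarrow> bool" where
  "observable_pair A C d \<longleftrightarrow>
     (\<forall>v \<in> carrier_vec d. (\<forall>k<d. C *\<^sub>v ((A ^\<^sub>m k) *\<^sub>v v) = 0\<^sub>v (dim_row C)) \<longrightarrow> v = 0\<^sub>v d)"

definition nilpotent_mat :: "real mat \<Rightarrow> nat \<Rightarrow> bool" where
  "nilpotent_mat M d \<longleftrightarrow> (\<exists>p. M ^\<^sub>m p = 0\<^sub>m d d)"

definition nbrs :: "nat \<Rightarrow> (nat \<Rightarrow> (nat \<times> nat) set) \<Rightarrow> nat \<Rightarrow> nat \<Rightarrow> nat set" where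
  "nbrs N E k i = {l. l < N \<and> l \<noteq> i \<and> (l, i) \<in> E k}"

definition union_strongly_connected :: "nat \<Rightarrow> (nat \<Rightarrow> (nat \<times> nat) set) \<Rightarrow> nat set \<Rightarrow> bool" where
  "union_strongly_connected N E S \<longleftrightarrow>
     (\<forall>i<N. \<forall>j<N. (i, j) \<in> ((\<Union>k\<in>S. E k) \<inter> ({..<N} \<times> {..<N}))\<^sup>*)"

definition joint_strong_conn :: "nat \<Rightarrow> (nat \<Rightarrow> (nat \<times> nat) set) \<Rightarrow> nat \<Rightarrow> bool" where
  "joint_strong_conn N E T \<longleftrightarrow> T \<ge> 1 \<and>
     (\<forall>k. union_strongly_connected N E {k * T ..< (k + 1) * T})"

(* block data: substate j has dimension nd j, meas_output of node i has dimension pd i,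
   Ab j q = A_{jq} (q \<le> j), Cb i q = C_{iq} (q \<le> i) *)
definition block_system :: "nat \<Rightarrow> (nat \<Rightarrow> nat) \<Rightarrow> (nat \<Rightarrow> nat) \<Rightarrow>
    (nat \<Rightarrow> nat \<Rightarrow> real mat) \<Rightarrow> (nat \<Rightarrow> nat \<Rightarrow> real mat) \<Rightarrow> bool" where
  "block_system N nd pd Ab Cb \<longleftrightarrow>
     (\<forall>j<N. \<forall>q\<le>j. Ab j q \<in> carrier_mat (nd j) (nd q)) \<and>
     (\<forall>i<N. \<forall>q\<le>i. Cb i q \<in> carrier_mat (pd i) (nd q)) \<and>
     (\<forall>j<N. observable_pair (Ab j j) (Cb j j) (nd j))"

definition true_traj :: "nat \<Rightarrow> (nat \<Rightarrow> nat) \<Rightarrow> (nat \<Rightarrow> nat \<Rightarrow> real mat) \<Rightarrow>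
    (nat \<Rightarrow> nat \<Rightarrow> real vec) \<Rightarrow> bool" where
  "true_traj N nd Ab z \<longleftrightarrow>
     (\<forall>j<N. z 0 j \<in> carrier_vec (nd j)) \<and>
     (\<forall>k. \<forall>j<N. z (Suc k) j = Ab j j *\<^sub>v z k j + vsum (nd j) (\<lambda>q. Ab j q *\<^sub>v z k q) j)"

definition meas_output :: "(nat \<Rightarrow> nat) \<Rightarrow> (nat \<Rightarrow> nat \<Rightarrow> real mat) \<Rightarrow>
    (nat \<Rightarrow> nat \<Rightarrow> real vec) \<Rightarrow> nat \<Rightarrow> nat \<Rightarrow> real vec" where
  "meas_output pd Cb z k i = vsum (pd i) (\<lambda>q. Cb i q *\<^sub>v z k q) (Suc i)"

(* A run of the freshness-index algorithm. tau k i j = \<tau>^(j)_i[k] (None = \<omega>),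
   zh k i j = \<hat>z^(j)_i[k].  The minimiser u is chosen arbitrarily (any minimiser),
   the same u being used for the index and the estimate update. *)
definition fi_run :: "nat \<Rightarrow> (nat \<Rightarrow> nat) \<Rightarrow> (nat \<Rightarrow> nat) \<Rightarrow>
    (nat \<Rightarrow> nat \<Rightarrow> real mat) \<Rightarrow> (nat \<Rightarrow> nat \<Rightarrow> real mat) \<Rightarrow> (nat \<Rightarrow> real mat) \<Rightarrow>
    (nat \<Rightarrow> (nat \<times> nat) set) \<Rightarrow> (nat \<Rightarrow> nat \<Rightarrow> real vec) \<Rightarrow>
    (nat \<Rightarrow> nat \<Rightarrow> nat \<Rightarrow> nat option) \<Rightarrow> (nat \<Rightarrow> nat \<Rightarrow> nat \<Rightarrow> real vec) \<Rightarrow> bool" where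
  "fi_run N nd pd Ab Cb L E z tau zh \<longleftrightarrow>
     (\<forall>j<N. tau 0 j j = Some 0) \<and>
     (\<forall>i<N. \<forall>j<N. i \<noteq> j \<longrightarrow> tau 0 i j = None) \<and>
     (\<forall>i<N. \<forall>j<N. zh 0 i j \<in> carrier_vec (nd j)) \<and>
     (\<forall>k. \<forall>j<N.
        tau (Suc k) j j = Some 0 \<and>
        zh (Suc k) j j = (Ab j j - L j * Cb j j) *\<^sub>v zh k j j
           + vsum (nd j) (\<lambda>q. (Ab j q - L j * Cb j q) *\<^sub>v zh k j q) j
           + L j *\<^sub>v meas_output pd Cb z k j) \<and>
     (\<forall>k. \<forall>i<N. \<forall>j<N. i \<noteq> j \<longrightarrow>
        (let M = {l \<in> nbrs N E k i. tau k l j \<noteq> None};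
             adopt = (\<lambda>u. Ab j j *\<^sub>v zh k u j + vsum (nd j) (\<lambda>q. Ab j q *\<^sub>v zh k i q) j);
             openl = Ab j j *\<^sub>v zh k i j + vsum (nd j) (\<lambda>q. Ab j q *\<^sub>v zh k i q) j
         in case tau k i j of
              None \<Rightarrow>
                (if M \<noteq> {} then
                   (\<exists>u\<in>M. (\<forall>l\<in>M. the (tau k u j) \<le> the (tau k l j)) \<and>
                          tau (Suc k) i j = Some (the (tau k u j) + 1) \<and>
                          zh (Suc k) i j = adopt u)
                 else tau (Suc k) i j = None \<and> zh (Suc k) i j = openl)
            | Some t \<Rightarrow>
                (let F = {l \<in> M. the (tau k l j) < t} in
                 if F \<noteq> {} then
                   (\<exists>u\<in>F. (\<forall>l\<in>F. the (tau k u j) \<le> the (tau k l j)) \<and>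
                          tau (Suc k) i j = Some (the (tau k u j) + 1) \<and>
                          zh (Suc k) i j = adopt u)
                 else tau (Suc k) i j = Some (t + 1) \<and> zh (Suc k) i j = openl)))"

definition gains_ok :: "nat \<Rightarrow> (nat \<Rightarrow> nat) \<Rightarrow> (nat \<Rightarrow> nat) \<Rightarrow>
    (nat \<Rightarrow> nat \<Rightarrow> real mat) \<Rightarrow> (nat \<Rightarrow> nat \<Rightarrow> real mat) \<Rightarrow> (nat \<Rightarrow> real mat) \<Rightarrow> bool" where
  "gains_ok N nd pd Ab Cb L \<longleftrightarrow>
     (\<forall>j<N. L j \<in> carrier_mat (nd j) (pd j) \<and> nilpotent_mat (Ab j j - L j * Cb j j) (nd j))"

end

theory Submission
  imports Defs "Jordan_Normal_Form.Schur_Decomposition"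
begin

text \<open>
Each source node runs a dead-beat observer for its own substate: observability of
\<open>(A\<^sub>j\<^sub>j, C\<^sub>j\<^sub>j)\<close> yields a gain making \<open>A\<^sub>j\<^sub>j - L\<^sub>j C\<^sub>j\<^sub>j\<close> nilpotent, so once the lower substates
are known exactly at the source, its estimate of substate \<open>j\<close> becomes exact after \<open>n\<^sub>j\<close> more
steps. A node whose freshness index for \<open>j\<close> equals \<open>t\<close> holds the source's estimate of time
\<open>k - t\<close>, propagated exactly through the (by then exactly known) dynamics; and joint strong
connectivity pushes every freshness index below \<open>N T\<close> within \<open>(N - 1) T\<close> steps. An induction
over the substates then lets substate \<open>j\<close> cost \<open>n\<^sub>j\<close> steps at its source plus \<open>2(N - 1)T \<ge> NT\<close>
steps of propagation.
\<close>

declare minus_carrier_mat[simp]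

lemma mat_eq_by_mult_vec:
  fixes X Y :: "'a::comm_ring_1 mat"
  assumes X: "X \<in> carrier_mat r c" and Y: "Y \<in> carrier_mat r c"
    and eq: "\<And>x. x \<in> carrier_vec c \<Longrightarrow> X *\<^sub>v x = Y *\<^sub>v x"
  shows "X = Y"
proof (rule eq_matI)
  fix i j assume i: "i < dim_row Y" and j: "j < dim_col Y"
  have "(X *\<^sub>v unit_vec c j) $ i = (Y *\<^sub>v unit_vec c j) $ i" using eq by simp
  thus "X $$ (i, j) = Y $$ (i, j)" using X Y i j by simp
qed (use X Y in auto)

lemma zero_mat_mult_vec[simp]: "x \<in> carrier_vec c \<Longrightarrow> (0\<^sub>m r c :: 'a::comm_ring_1 mat) *\<^sub>v x = 0\<^sub>v r"
  by (intro eq_vecI) auto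

lemma mult_mat_zero_vec[simp]: "M \<in> carrier_mat r c \<Longrightarrow> (M :: 'a::comm_ring_1 mat) *\<^sub>v 0\<^sub>v c = 0\<^sub>v r"
  by (intro eq_vecI) (auto simp: scalar_prod_def)

lemma mult_carrier_mat_square[simp]:
  "A \<in> carrier_mat n n \<Longrightarrow> B \<in> carrier_mat n n \<Longrightarrow> A * B \<in> carrier_mat n n"
  by simp

lemma minus_zero_mat[simp]: "X \<in> carrier_mat r c \<Longrightarrow> (X :: 'a::comm_ring_1 mat) - 0\<^sub>m r c = X"
  by (intro eq_matI) auto

lemma minus_plus_mat: "X \<in> carrier_mat r c \<Longrightarrow> Y \<in> carrier_mat r c \<Longrightarrow> Z \<in> carrier_mat r c \<Longrightarrow>
   (X :: 'a::comm_ring_1 mat) - (Y + Z) = X - Y - Z"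
  by (intro eq_matI) auto

lemma assoc_mult_mat3_vec:
  assumes "A \<in> carrier_mat a b" "B \<in> carrier_mat b c" "C \<in> carrier_mat c e" "x \<in> carrier_vec e"
  shows "A * B * C *\<^sub>v x = A *\<^sub>v (B *\<^sub>v (C *\<^sub>v x))"
proof -
  have "A * B * C *\<^sub>v x = (A * B) *\<^sub>v (C *\<^sub>v x)" by (rule assoc_mult_mat_vec) (use assms in auto)
  also have "\<dots> = A *\<^sub>v (B *\<^sub>v (C *\<^sub>v x))" by (rule assoc_mult_mat_vec) (use assms in auto)
  finally show ?thesis .
qed

lemma minus_mult_mat_mult_vec:
  fixes A G C :: "'a::comm_ring_1 mat"
  assumes A: "A \<in> carrier_mat d n" and G: "G \<in> carrier_mat d p" and C: "C \<in> carrier_mat p n"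
    and v: "v \<in> carrier_vec n"
  shows "(A - G * C) *\<^sub>v v = A *\<^sub>v v - G *\<^sub>v (C *\<^sub>v v)"
proof -
  have GC: "G * C \<in> carrier_mat d n" using G C by simp
  show ?thesis using minus_mult_distrib_mat_vec[OF A GC v] assoc_mult_mat_vec[OF G C v] by simp
qed

lemma pow_mat_mult_vec_carrier[simp]:
  "X \<in> carrier_mat n n \<Longrightarrow> v \<in> carrier_vec n \<Longrightarrow> X ^\<^sub>m k *\<^sub>v v \<in> carrier_vec n"
  by (rule mult_mat_vec_carrier[OF pow_carrier_mat])

lemma pow_mat_Suc_left:
  fixes X :: "'a::comm_ring_1 mat"
  assumes X: "X \<in> carrier_mat n n"
  shows "X ^\<^sub>m Suc k = X * X ^\<^sub>m k"
proof (induction k)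
  case 0 show ?case using X by simp
next
  case (Suc k)
  have "X ^\<^sub>m Suc (Suc k) = X * X ^\<^sub>m k * X" using Suc by simp
  also have "\<dots> = X * X ^\<^sub>m Suc k" using X by (simp add: assoc_mult_mat[of _ n n _ n _ n])
  finally show ?case .
qed

lemma pow_mat_Suc_mult_swap:
  fixes U V :: "'a::comm_ring_1 mat"
  assumes U: "U \<in> carrier_mat n n" and V: "V \<in> carrier_mat n n"
  shows "(U * V) ^\<^sub>m Suc q = U * (V * U) ^\<^sub>m q * V"
proof (induction q)
  case 0
  show ?case using U V by simp
next
  case (Suc q)
  have "(U * V) ^\<^sub>m Suc (Suc q) = (U * V) ^\<^sub>m Suc q * (U * V)" by simp
  also have "\<dots> = U * (V * U) ^\<^sub>m q * V * (U * V)" using Suc by simp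
  also have "\<dots> = U * ((V * U) ^\<^sub>m q * (V * U)) * V"
    using U V by (simp add: assoc_mult_mat[of _ n n _ n _ n])
  also have "\<dots> = U * (V * U) ^\<^sub>m Suc q * V" by simp
  finally show ?case .
qed

lemma pow_mat_Suc_mult_absorbing:
  fixes Q M :: "'a::comm_ring_1 mat"
  assumes Q: "Q \<in> carrier_mat n n" and M: "M \<in> carrier_mat n n" and QM: "Q * M = M"
  shows "M ^\<^sub>m Suc j * Q = (M * Q) ^\<^sub>m Suc j"
proof (induction j)
  case 0
  show ?case using Q M by simp
next
  case (Suc j)
  have "M ^\<^sub>m Suc (Suc j) * Q = M ^\<^sub>m Suc j * (Q * M) * Q"
    using QM by simp
  also have "\<dots> = M ^\<^sub>m Suc j * Q * (M * Q)"
    using Q M by (simp add: assoc_mult_mat[of _ n n _ n _ n])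
  also have "\<dots> = (M * Q) ^\<^sub>m Suc (Suc j)" using Suc by simp
  finally show ?case .
qed

lemma nilpotent_recurrence_vanishes:
  fixes M :: "'a::comm_ring_1 mat"
  assumes M: "M \<in> carrier_mat d d" and Md: "M ^\<^sub>m d = 0\<^sub>m d d"
    and e: "\<And>k. e k \<in> carrier_vec d" and rec: "\<And>k. K \<le> k \<Longrightarrow> e (Suc k) = M *\<^sub>v e k"
    and k: "K + d \<le> k"
  shows "e k = 0\<^sub>v d"
proof -
  have pow: "e (K + r) = M ^\<^sub>m r *\<^sub>v e K" for r
  proof (induction r)
    case 0 show ?case using e[of K] M by simp
  next
    case (Suc r)
    have "e (K + Suc r) = M *\<^sub>v (M ^\<^sub>m r *\<^sub>v e K)" using rec[of "K + r"] Suc.IH by simp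
    also have "\<dots> = M ^\<^sub>m Suc r *\<^sub>v e K"
      using pow_mat_Suc_left[OF M, of r] assoc_mult_mat_vec[OF M pow_carrier_mat[OF M, of r] e[of K]]
      by simp
    finally show ?case .
  qed
  have "e (K + d + r) = 0\<^sub>v d" for r
  proof (induction r)
    case 0 show ?case using pow[of d] Md e[of K] by simp
  next
    case (Suc r) thus ?case using rec[of "K + d + r"] M by simp
  qed
  from this[of "k - (K + d)"] show ?thesis using k by simp
qed

lemma strictly_upper_triangular_pow_entries:
  fixes B :: "'a::comm_ring_1 mat"
  assumes B: "B \<in> carrier_mat n n" and sut: "\<forall>i<n. \<forall>j<n. j \<le> i \<longrightarrow> B $$ (i,j) = 0"
  shows "\<forall>i<n. \<forall>j<n. j < i + k \<longrightarrow> (B ^\<^sub>m k) $$ (i,j) = 0"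
proof (induction k)
  case 0
  then show ?case using B by auto
next
  case (Suc k)
  show ?case
  proof (intro allI impI)
    fix i j assume i: "i < n" and j: "j < n" and ij: "j < i + Suc k"
    have "(B ^\<^sub>m Suc k) $$ (i,j) = (\<Sum>l<n. (B ^\<^sub>m k) $$ (i,l) * B $$ (l,j))"
      using B i j by (simp add: index_mult_mat scalar_prod_def atLeast0LessThan)
    also have "\<dots> = 0"
    proof (rule sum.neutral, intro ballI)
      fix l assume l: "l \<in> {..<n}"
      show "(B ^\<^sub>m k) $$ (i,l) * B $$ (l,j) = 0"
      proof (cases "l < i + k")
        case True then show ?thesis using Suc.IH i l by auto
      next
        case False then show ?thesis using sut l j ij by auto
      qed
    qed
    finally show "(B ^\<^sub>m Suc k) $$ (i,j) = 0" .
  qed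
qed

lemma nilpotent_eigenvalues_zero:
  fixes M :: "complex mat"
  assumes M: "M \<in> carrier_mat n n" and Mp: "M ^\<^sub>m p = 0\<^sub>m n n" and ev: "eigenvalue M a"
  shows "a = 0"
proof -
  obtain v where v: "eigenvector M v a" using ev unfolding eigenvalue_def by auto
  have v_car: "v \<in> carrier_vec n" and v0: "v \<noteq> 0\<^sub>v n" using v M unfolding eigenvector_def by auto
  have "a ^ p \<cdot>\<^sub>v v = 0\<^sub>v n" using eigenvector_pow[OF M v, of p] Mp v_car by simp
  moreover obtain i where i: "i < n" "v $ i \<noteq> 0" using v_car v0 by (metis eq_vecI carrier_vecD index_zero_vec)
  ultimately have "a ^ p * v $ i = 0" using v_car by (metis index_smult_vec(1) index_zero_vec(1) carrier_vecD)
  thus "a = 0" using i by simp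
qed

text \<open>Over \<open>\<complex>\<close>, a Schur form of a nilpotent matrix is strictly upper triangular.\<close>

lemma nilpotent_mat_pow_dim:
  fixes M :: "real mat"
  assumes M: "M \<in> carrier_mat n n" and nil: "nilpotent_mat M n"
  shows "M ^\<^sub>m n = 0\<^sub>m n n"
proof -
  obtain p where p: "M ^\<^sub>m p = 0\<^sub>m n n" using nil unfolding nilpotent_mat_def by auto
  define Mc where "Mc = map_mat complex_of_real M"
  have Mc: "Mc \<in> carrier_mat n n" using M unfolding Mc_def by simp
  have z0: "map_mat complex_of_real (0\<^sub>m n n) = 0\<^sub>m n n" by (rule eq_matI) auto
  have Mcp: "Mc ^\<^sub>m p = 0\<^sub>m n n"
    unfolding Mc_def using of_real_hom.mat_hom_pow[OF M, of p] p z0 by metis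
  obtain as where cp: "char_poly Mc = (\<Prod>a\<leftarrow>as. [:- a, 1:])" and len: "length as = n"
    using char_poly_factorized[OF Mc] by auto
  have as0: "a = 0" if a: "a \<in> set as" for a
  proof (rule nilpotent_eigenvalues_zero[OF Mc Mcp])
    have "poly (char_poly Mc) a = 0" unfolding cp using a
      by (induction as) (auto simp: poly_prod_list)
    thus "eigenvalue Mc a" using eigenvalue_root_char_poly[OF Mc] by simp
  qed
  obtain B P Q where sd: "schur_decomposition Mc as = (B, P, Q)"
    by (cases "schur_decomposition Mc as") auto
  from schur_decomposition[OF Mc cp sd]
  have sim: "similar_mat_wit Mc B P Q" and ut: "upper_triangular B" and dg: "diag_mat B = as"
    by auto
  have B: "B \<in> carrier_mat n n" and PQ: "P \<in> carrier_mat n n" "Q \<in> carrier_mat n n"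
    using sim Mc unfolding similar_mat_wit_def Let_def by auto
  have sut: "\<forall>i<n. \<forall>j<n. j \<le> i \<longrightarrow> B $$ (i,j) = 0"
  proof (intro allI impI)
    fix i j assume i: "i < n" and j: "j < n" and ji: "j \<le> i"
    show "B $$ (i,j) = 0"
    proof (cases "j = i")
      case True
      have "B $$ (i,i) = as ! i" using dg[symmetric] B i by (simp add: diag_mat_def)
      then show ?thesis using True as0 len i by auto
    next
      case False then show ?thesis using ut B i ji unfolding upper_triangular_def by auto
    qed
  qed
  have "B ^\<^sub>m n = 0\<^sub>m n n"
    using strictly_upper_triangular_pow_entries[OF B sut, of n] B by (intro eq_matI) auto
  hence "Mc ^\<^sub>m n = 0\<^sub>m n n" using similar_mat_wit_pow_id[OF sim, of n] PQ by simp
  hence "map_mat complex_of_real (M ^\<^sub>m n) = map_mat complex_of_real (0\<^sub>m n n)"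
    unfolding Mc_def using of_real_hom.mat_hom_pow[OF M, of n] z0 by metis
  thus ?thesis by (rule of_real_hom.mat_hom_inj)
qed

section \<open>Generalized inverses\<close>

lemma generalized_inverse_row_dichotomy:
  fixes B1 R1 :: "real mat"
  assumes B1: "B1 \<in> carrier_mat p d" and R1: "R1 \<in> carrier_mat d p"
    and ginv: "B1 * R1 * B1 = B1" and b: "b \<in> carrier_vec d"
  obtains (kernel) u where "u \<in> carrier_vec d" "B1 *\<^sub>v u = 0\<^sub>v p" "b \<bullet> u = 1"
  | (factors) "\<forall>x\<in>carrier_vec d. b \<bullet> (R1 *\<^sub>v (B1 *\<^sub>v x)) = b \<bullet> x"
proof -
  define P where "P = 1\<^sub>m d - R1 * B1"
  have P: "P \<in> carrier_mat d d" unfolding P_def using R1 B1 by simp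
  have Px: "P *\<^sub>v x = x - R1 *\<^sub>v (B1 *\<^sub>v x)" if x: "x \<in> carrier_vec d" for x
    unfolding P_def using R1 B1 x
    by (simp add: minus_mult_distrib_mat_vec[of "1\<^sub>m d" d d "R1 * B1"] assoc_mult_mat_vec[of _ d p])
  have B1P: "B1 *\<^sub>v (P *\<^sub>v x) = 0\<^sub>v p" if x: "x \<in> carrier_vec d" for x
  proof -
    have "B1 *\<^sub>v (R1 *\<^sub>v (B1 *\<^sub>v x)) = B1 *\<^sub>v x"
      using assoc_mult_mat3_vec[OF B1 R1 B1 x] ginv by simp
    thus ?thesis using Px[OF x] B1 R1 x by (simp add: mult_minus_distrib_mat_vec)
  qed
  show thesis
  proof (cases "\<exists>x\<in>carrier_vec d. b \<bullet> (P *\<^sub>v x) \<noteq> 0")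
    case True
    then obtain x where x: "x \<in> carrier_vec d" and nz: "b \<bullet> (P *\<^sub>v x) \<noteq> 0" by auto
    define u where "u = (1 / (b \<bullet> (P *\<^sub>v x))) \<cdot>\<^sub>v (P *\<^sub>v x)"
    have "u = P *\<^sub>v ((1 / (b \<bullet> (P *\<^sub>v x))) \<cdot>\<^sub>v x)" unfolding u_def using P x
      by (simp add: mult_mat_vec)
    hence B1u: "B1 *\<^sub>v u = 0\<^sub>v p" using B1P x by simp
    have "u \<in> carrier_vec d" unfolding u_def using P x by simp
    moreover note B1u
    moreover have "b \<bullet> u = 1" unfolding u_def using nz b P x by simp
    ultimately show ?thesis by (rule kernel)
  next
    case False
    show ?thesis
    proof (rule factors, intro ballI)
      fix x :: "real vec" assume x: "x \<in> carrier_vec d"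
      have "b \<bullet> (x - R1 *\<^sub>v (B1 *\<^sub>v x)) = 0" using False x Px by auto
      thus "b \<bullet> (R1 *\<^sub>v (B1 *\<^sub>v x)) = b \<bullet> x" using b x R1 B1
        by (simp add: scalar_prod_minus_distrib)
    qed
  qed
qed

text \<open>The matrix \<open>[R\<^sub>1 - u (b\<^sup>T R\<^sub>1) | u]\<close>; for suitable \<open>u\<close> it is a generalized inverse of
  \<open>B\<^sub>1\<close> with the row \<open>b\<close> appended.\<close>

definition ginv_append_row :: "real mat \<Rightarrow> real vec \<Rightarrow> real vec \<Rightarrow> real mat" where
  "ginv_append_row R1 b u = mat (dim_row R1) (Suc (dim_col R1))
     (\<lambda>(r, c). if c < dim_col R1 then R1 $$ (r, c) - (b \<bullet> col R1 c) * u $ r else u $ r)"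

lemma ginv_append_row_carrier:
  "R1 \<in> carrier_mat d p \<Longrightarrow> ginv_append_row R1 b u \<in> carrier_mat d (Suc p)"
  unfolding ginv_append_row_def by simp

lemma ginv_append_row_mult_vec:
  fixes R1 :: "real mat"
  assumes R1: "R1 \<in> carrier_mat d p" and b: "b \<in> carrier_vec d" and u: "u \<in> carrier_vec d"
    and y: "y \<in> carrier_vec (Suc p)"
  defines "y1 \<equiv> vec p (\<lambda>i. y $ i)"
  shows "ginv_append_row R1 b u *\<^sub>v y = R1 *\<^sub>v y1 - (b \<bullet> (R1 *\<^sub>v y1)) \<cdot>\<^sub>v u + y $ p \<cdot>\<^sub>v u"
proof (rule eq_vecI)
  have bR1y: "b \<bullet> (R1 *\<^sub>v y1) = (\<Sum>c<p. (b \<bullet> col R1 c) * y $ c)"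
  proof -
    have "b \<bullet> (R1 *\<^sub>v y1) = (\<Sum>i<d. b $ i * (\<Sum>c<p. R1 $$ (i,c) * y $ c))"
      using b R1 unfolding y1_def
      by (simp add: scalar_prod_def mult_mat_vec_def row_def atLeast0LessThan)
    also have "\<dots> = (\<Sum>c<p. (\<Sum>i<d. b $ i * R1 $$ (i,c)) * y $ c)"
      by (simp add: sum_distrib_left sum_distrib_right mult.assoc sum.swap[of _ "{..<d}"])
    also have "\<dots> = (\<Sum>c<p. (b \<bullet> col R1 c) * y $ c)"
      using b R1 by (intro sum.cong refl) (simp add: scalar_prod_def col_def atLeast0LessThan)
    finally show ?thesis .
  qed
  fix r assume "r < dim_vec (R1 *\<^sub>v y1 - (b \<bullet> (R1 *\<^sub>v y1)) \<cdot>\<^sub>v u + y $ p \<cdot>\<^sub>v u)"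
  hence r: "r < d" using u by simp
  have "(ginv_append_row R1 b u *\<^sub>v y) $ r
      = (\<Sum>c<p. (R1 $$ (r,c) - (b \<bullet> col R1 c) * u $ r) * y $ c) + u $ r * y $ p"
    using R1 r y
    by (simp add: ginv_append_row_def scalar_prod_def mult_mat_vec_def row_def atLeast0LessThan
        sum.lessThan_Suc)
  also have "\<dots> = (\<Sum>c<p. R1 $$ (r,c) * y $ c) - u $ r * (\<Sum>c<p. (b \<bullet> col R1 c) * y $ c)
      + u $ r * y $ p"
    by (simp add: algebra_simps sum_subtractf sum_distrib_left)
  also have "\<dots> = (R1 *\<^sub>v y1 - (b \<bullet> (R1 *\<^sub>v y1)) \<cdot>\<^sub>v u + y $ p \<cdot>\<^sub>v u) $ r"
    unfolding bR1y using r R1 u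
    by (simp add: y1_def scalar_prod_def mult_mat_vec_def row_def atLeast0LessThan)
  finally show "(ginv_append_row R1 b u *\<^sub>v y) $ r = (R1 *\<^sub>v y1 - (b \<bullet> (R1 *\<^sub>v y1)) \<cdot>\<^sub>v u + y $ p \<cdot>\<^sub>v u) $ r" .
qed (use R1 u in \<open>simp add: ginv_append_row_def\<close>)

lemma generalized_inverse_append_row:
  fixes B B1 R1 :: "real mat"
  assumes B: "B \<in> carrier_mat (Suc p) d" and B1: "B1 \<in> carrier_mat p d" and b: "b \<in> carrier_vec d"
    and Bx: "\<And>x. x \<in> carrier_vec d \<Longrightarrow>
      B *\<^sub>v x = vec (Suc p) (\<lambda>i. if i < p then (B1 *\<^sub>v x) $ i else b \<bullet> x)"
    and R1: "R1 \<in> carrier_mat d p" and R1g: "B1 * R1 * B1 = B1"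
  shows "\<exists>R \<in> carrier_mat d (Suc p). B * R * B = B"
proof -
  have B1R1B1: "B1 *\<^sub>v (R1 *\<^sub>v (B1 *\<^sub>v x)) = B1 *\<^sub>v x" if x: "x \<in> carrier_vec d" for x
    using assoc_mult_mat3_vec[OF B1 R1 B1 x] R1g by simp
  obtain u where u: "u \<in> carrier_vec d" and B1u: "B1 *\<^sub>v u = 0\<^sub>v p"
    and bu: "b \<bullet> u = 1 \<or> (u = 0\<^sub>v d \<and> (\<forall>x\<in>carrier_vec d. b \<bullet> (R1 *\<^sub>v (B1 *\<^sub>v x)) = b \<bullet> x))"
  proof (rule generalized_inverse_row_dichotomy[OF B1 R1 R1g b])
    fix u assume "u \<in> carrier_vec d" "B1 *\<^sub>v u = 0\<^sub>v p" "b \<bullet> u = 1"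
    thus thesis using that by blast
  next
    assume "\<forall>x\<in>carrier_vec d. b \<bullet> (R1 *\<^sub>v (B1 *\<^sub>v x)) = b \<bullet> x"
    thus thesis using that[of "0\<^sub>v d"] B1 by simp
  qed
  define R where "R = ginv_append_row R1 b u"
  have R: "R \<in> carrier_mat d (Suc p)" unfolding R_def using ginv_append_row_carrier[OF R1] .
  show ?thesis
  proof (rule bexI[OF _ R], rule mat_eq_by_mult_vec[of _ "Suc p" d])
    fix x :: "real vec" assume x: "x \<in> carrier_vec d"
    define s where "s = R1 *\<^sub>v (B1 *\<^sub>v x)"
    have s: "s \<in> carrier_vec d" unfolding s_def using R1 B1 x by simp
    define w where "w = R *\<^sub>v (B *\<^sub>v x)"
    have y1: "vec p (\<lambda>i. (B *\<^sub>v x) $ i) = B1 *\<^sub>v x" unfolding Bx[OF x] using B1 by (intro eq_vecI) auto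
    have By: "B *\<^sub>v x \<in> carrier_vec (Suc p)" using B x by simp
    have w_eq: "w = s - (b \<bullet> s) \<cdot>\<^sub>v u + (b \<bullet> x) \<cdot>\<^sub>v u"
      using ginv_append_row_mult_vec[OF R1 b u By, unfolded y1] unfolding w_def R_def s_def
      by (simp add: Bx[OF x])
    have w: "w \<in> carrier_vec d" unfolding w_eq using s u by simp
    have B1w: "B1 *\<^sub>v w = B1 *\<^sub>v x"
    proof -
      have "B1 *\<^sub>v w = B1 *\<^sub>v s - (b \<bullet> s) \<cdot>\<^sub>v (B1 *\<^sub>v u) + (b \<bullet> x) \<cdot>\<^sub>v (B1 *\<^sub>v u)"
        unfolding w_eq using B1 s u
        by (simp add: mult_add_distrib_mat_vec mult_minus_distrib_mat_vec mult_mat_vec)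
      also have "\<dots> = B1 *\<^sub>v x" unfolding B1u s_def using B1R1B1[OF x] B1 x by (intro eq_vecI) auto
      finally show ?thesis .
    qed
    have bw: "b \<bullet> w = b \<bullet> x"
    proof -
      have "b \<bullet> w = b \<bullet> s - (b \<bullet> s) * (b \<bullet> u) + (b \<bullet> x) * (b \<bullet> u)"
        unfolding w_eq using b s u by (simp add: scalar_prod_add_distrib scalar_prod_minus_distrib)
      thus ?thesis using bu unfolding s_def using x b by auto
    qed
    have "B * R * B *\<^sub>v x = B *\<^sub>v w" unfolding w_def using assoc_mult_mat3_vec[OF B R B x] by simp
    also have "\<dots> = B *\<^sub>v x" unfolding Bx[OF w] Bx[OF x] B1w bw ..
    finally show "B * R * B *\<^sub>v x = B *\<^sub>v x" .
  qed (use B R in auto)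
qed

lemma generalized_inverse_exists:
  fixes B :: "real mat"
  shows "B \<in> carrier_mat p d \<Longrightarrow> \<exists>R \<in> carrier_mat d p. B * R * B = B"
proof (induction p arbitrary: B)
  case 0
  show ?case
    by (rule bexI[of _ "0\<^sub>m d 0"], rule eq_matI) (use 0 in auto)
next
  case (Suc p)
  note B = Suc.prems
  define B1 where "B1 = mat p d (\<lambda>(i,j). B $$ (i,j))"
  define b where "b = row B p"
  have B1: "B1 \<in> carrier_mat p d" unfolding B1_def by simp
  have b: "b \<in> carrier_vec d" unfolding b_def using B by (metis row_carrier carrier_matD(2))
  have Bx: "B *\<^sub>v x = vec (Suc p) (\<lambda>i. if i < p then (B1 *\<^sub>v x) $ i else b \<bullet> x)"
    if x: "x \<in> carrier_vec d" for x
    using B x unfolding B1_def b_def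
    by (intro eq_vecI) (auto simp: row_def less_Suc_eq scalar_prod_def)
  obtain R1 where R1: "R1 \<in> carrier_mat d p" and R1g: "B1 * R1 * B1 = B1"
    using Suc.IH[OF B1] by auto
  show ?case by (rule generalized_inverse_append_row[OF B B1 b Bx R1 R1g])
qed

section \<open>Dead-beat observer gains\<close>

text \<open>Observability of \<open>(A, C)\<close> relative to the range of an idempotent \<open>Q\<close>, with horizon \<open>m\<close>:
  \<open>observable_on (1\<^sub>m d) A C d d\<close> is \<open>observable_pair A C d\<close>.\<close>

definition observable_on :: "real mat \<Rightarrow> real mat \<Rightarrow> real mat \<Rightarrow> nat \<Rightarrow> nat \<Rightarrow> bool" where
  "observable_on Q A C d m \<longleftrightarrow>
     (\<forall>v\<in>carrier_vec d. Q *\<^sub>v v = v \<and> (\<forall>k<m. C *\<^sub>v ((Q * A) ^\<^sub>m k *\<^sub>v v) = 0\<^sub>v (dim_row C))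
        \<longrightarrow> v = 0\<^sub>v d)"

text \<open>\<open>Q - R C Q\<close> is an idempotent onto \<open>ker C \<inter> range Q\<close> when \<open>R\<close> is a generalized inverse of
  \<open>C Q\<close> moved into the range of \<open>Q\<close>.\<close>

lemma kernel_projection_exists:
  fixes Q C :: "real mat"
  assumes Q: "Q \<in> carrier_mat d d" and QQ: "Q * Q = Q" and C: "C \<in> carrier_mat p d"
  obtains R where "R \<in> carrier_mat d p"
    "Q * (Q - R * (C * Q)) = Q - R * (C * Q)"
    "(Q - R * (C * Q)) * (Q - R * (C * Q)) = Q - R * (C * Q)"
    "C * (Q - R * (C * Q)) = 0\<^sub>m p d"
proof -
  have CQ: "C * Q \<in> carrier_mat p d" using C Q by simp
  obtain R0 where R0: "R0 \<in> carrier_mat d p" and g: "C * Q * R0 * (C * Q) = C * Q"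
    using generalized_inverse_exists[OF CQ] by auto
  define R where "R = Q * R0"
  define Q' where "Q' = Q - R * (C * Q)"
  have R: "R \<in> carrier_mat d p" unfolding R_def using Q R0 by simp
  have QR: "Q * R = R" unfolding R_def using Q R0 QQ by (metis assoc_mult_mat)
  have CRCQ: "C * R * (C * Q) = C * Q" unfolding R_def using g C Q R0
    by (metis assoc_mult_mat mult_carrier_mat)
  have Q': "Q' \<in> carrier_mat d d" unfolding Q'_def using Q R C by simp
  have QQ': "Q * Q' = Q'"
  proof -
    have "Q * Q' = Q * Q - Q * (R * (C * Q))" unfolding Q'_def
      by (rule mult_minus_distrib_mat[OF Q Q]) (use R C Q in simp)
    also have "Q * (R * (C * Q)) = (Q * R) * (C * Q)" using Q R CQ by simp
    finally show ?thesis unfolding QR QQ Q'_def .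
  qed
  have CQ': "C * Q' = 0\<^sub>m p d"
  proof -
    have "C * Q' = C * Q - C * (R * (C * Q))" unfolding Q'_def
      by (rule mult_minus_distrib_mat[OF C Q]) (use R C Q in simp)
    also have "C * (R * (C * Q)) = C * Q" using CRCQ C R CQ by simp
    finally show ?thesis using CQ by simp
  qed
  have "Q' * Q' = Q * Q' - R * (C * Q) * Q'"
    unfolding Q'_def by (rule minus_mult_distrib_mat[OF Q _ Q'[unfolded Q'_def]]) (use R C Q in simp)
  also have "R * (C * Q) * Q' = R * (C * (Q * Q'))"
    using assoc_mult_mat[OF R CQ Q'] assoc_mult_mat[OF C Q Q'] by simp
  also have "\<dots> = 0\<^sub>m d d" unfolding QQ' CQ' using R by simp
  finally have Q'Q': "Q' * Q' = Q'" unfolding QQ' using Q' by simp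
  show thesis using R QQ' Q'Q' CQ' unfolding Q'_def by (rule that)
qed

lemma kernel_projection_mult_agree:
  fixes A Q C R :: "real mat"
  assumes A: "A \<in> carrier_mat d d" and Q: "Q \<in> carrier_mat d d" and C: "C \<in> carrier_mat p d"
    and R: "R \<in> carrier_mat d p" and Q'_def: "Q' = Q - R * (C * Q)"
    and w: "w \<in> carrier_vec d" and silent: "C * Q * A *\<^sub>v w = 0\<^sub>v p"
  shows "(Q' * A) *\<^sub>v w = (Q * A) *\<^sub>v w"
proof -
  have CQ: "C * Q \<in> carrier_mat p d" and RCQ: "R * (C * Q) \<in> carrier_mat d d" using C Q R by auto
  have Q': "Q' \<in> carrier_mat d d" unfolding Q'_def using Q RCQ by simp
  have Aw: "A *\<^sub>v w \<in> carrier_vec d" using A w by simp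
  have "(Q' * A) *\<^sub>v w = Q' *\<^sub>v (A *\<^sub>v w)" by (rule assoc_mult_mat_vec[OF Q' A w])
  also have "\<dots> = Q *\<^sub>v (A *\<^sub>v w) - (R * (C * Q)) *\<^sub>v (A *\<^sub>v w)"
    unfolding Q'_def by (rule minus_mult_distrib_mat_vec[OF Q RCQ Aw])
  also have "(R * (C * Q)) *\<^sub>v (A *\<^sub>v w) = R *\<^sub>v (C * Q * A *\<^sub>v w)"
    using assoc_mult_mat_vec[OF R CQ Aw] assoc_mult_mat3_vec[OF C Q A w]
      assoc_mult_mat_vec[OF C Q Aw] by simp
  also have "\<dots> = 0\<^sub>v d" unfolding silent using R by simp
  also have "Q *\<^sub>v (A *\<^sub>v w) = (Q * A) *\<^sub>v w" using assoc_mult_mat_vec[OF Q A w] by simp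
  finally show ?thesis using Q A w by (intro eq_vecI) auto
qed

text \<open>Since \<open>Q' A\<close> and \<open>Q A\<close> agree on \<open>ker (C Q A)\<close>, an orbit in \<open>range Q' \<subseteq> ker C\<close> on which
  \<open>C Q A\<close> stays silent for \<open>m\<close> steps is an orbit of \<open>Q A\<close> on which \<open>C\<close> stays silent for
  \<open>m + 1\<close> steps.\<close>

lemma observable_on_kernel_projection:
  fixes A Q C R :: "real mat"
  assumes A: "A \<in> carrier_mat d d" and Q: "Q \<in> carrier_mat d d" and C: "C \<in> carrier_mat p d"
    and R: "R \<in> carrier_mat d p" and Q'_def: "Q' = Q - R * (C * Q)"
    and QQ': "Q * Q' = Q'" and CQ': "C * Q' = 0\<^sub>m p d"
    and obs: "observable_on Q A C d (Suc m)"
  shows "observable_on Q' A (C * Q * A) d m"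
  unfolding observable_on_def
proof (intro ballI impI)
  define D where "D = C * Q * A"
  have Q': "Q' \<in> carrier_mat d d" unfolding Q'_def using Q R C by simp
  have QA: "Q * A \<in> carrier_mat d d" and Q'A: "Q' * A \<in> carrier_mat d d" using Q Q' A by auto
  fix v :: "real vec" assume v: "v \<in> carrier_vec d"
    and h: "Q' *\<^sub>v v = v \<and> (\<forall>k<m. C * Q * A *\<^sub>v ((Q' * A) ^\<^sub>m k *\<^sub>v v) = 0\<^sub>v (dim_row (C * Q * A)))"
  have Q'v: "Q' *\<^sub>v v = v" and silent: "\<And>k. k < m \<Longrightarrow> D *\<^sub>v ((Q' * A) ^\<^sub>m k *\<^sub>v v) = 0\<^sub>v p"
    using h C unfolding D_def by auto
  have Qv: "Q *\<^sub>v v = v" using assoc_mult_mat_vec[OF Q Q' v] QQ' Q'v by simp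
  have Cv: "C *\<^sub>v v = 0\<^sub>v p" using assoc_mult_mat_vec[OF C Q' v] CQ' Q'v v by simp
  have pow_Suc: "X ^\<^sub>m Suc k *\<^sub>v w = X *\<^sub>v (X ^\<^sub>m k *\<^sub>v w)"
    if X: "X \<in> carrier_mat d d" and w: "w \<in> carrier_vec d" for X :: "real mat" and k w
    using pow_mat_Suc_left[OF X, of k] assoc_mult_mat_vec[OF X _ w, of "X ^\<^sub>m k"] X by simp
  have agree: "(Q' * A) *\<^sub>v w = (Q * A) *\<^sub>v w" if "w \<in> carrier_vec d" "D *\<^sub>v w = 0\<^sub>v p" for w
    using kernel_projection_mult_agree[OF A Q C R Q'_def that[unfolded D_def]] .
  have orbits: "(Q' * A) ^\<^sub>m k *\<^sub>v v = (Q * A) ^\<^sub>m k *\<^sub>v v" if "k \<le> m" for k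
    using that
  proof (induction k)
    case 0 show ?case using Q' Q A v by simp
  next
    case (Suc k)
    have w: "(Q' * A) ^\<^sub>m k *\<^sub>v v \<in> carrier_vec d" using Q'A v by simp
    have "k < m" using Suc.prems by simp
    hence "(Q' * A) ^\<^sub>m Suc k *\<^sub>v v = (Q * A) *\<^sub>v ((Q' * A) ^\<^sub>m k *\<^sub>v v)"
      using pow_Suc[OF Q'A v] agree[OF w silent] by simp
    also have "\<dots> = (Q * A) ^\<^sub>m Suc k *\<^sub>v v" using Suc pow_Suc[OF QA v] by simp
    finally show ?case .
  qed
  have "C *\<^sub>v ((Q * A) ^\<^sub>m k *\<^sub>v v) = 0\<^sub>v p" if k: "k < Suc m" for k
  proof (cases k)
    case 0 then show ?thesis using Cv Q A v by simp
  next
    case (Suc k')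
    have y: "(Q' * A) ^\<^sub>m k' *\<^sub>v v \<in> carrier_vec d" using Q'A v by simp
    have "C *\<^sub>v ((Q * A) ^\<^sub>m k *\<^sub>v v) = C *\<^sub>v ((Q * A) *\<^sub>v ((Q' * A) ^\<^sub>m k' *\<^sub>v v))"
      unfolding Suc pow_Suc[OF QA v] using orbits[of k'] k Suc by simp
    also have "\<dots> = D *\<^sub>v ((Q' * A) ^\<^sub>m k' *\<^sub>v v)"
      unfolding D_def using assoc_mult_mat3_vec[OF C Q A y] assoc_mult_mat_vec[OF Q A y] by simp
    also have "\<dots> = 0\<^sub>v p" using silent k Suc by simp
    finally show ?thesis .
  qed
  thus "v = 0\<^sub>v d" using obs v Qv C unfolding observable_on_def by auto
qed

lemma closed_loop_pow_factor:
  fixes A Q C W :: "real mat"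
  assumes A: "A \<in> carrier_mat d d" and Q: "Q \<in> carrier_mat d d" and C: "C \<in> carrier_mat p d"
    and W: "W \<in> carrier_mat d p" and QQ: "Q * Q = Q"
  shows "(Q * A - Q * A * W * C) ^\<^sub>m Suc q * Q = Q * A * ((Q - W * C * Q) * (Q * A)) ^\<^sub>m q * (Q - W * C * Q)"
proof -
  define G where "G = Q * A * W"
  define M where "M = Q * A - G * C"
  define U where "U = Q * A"
  define V where "V = Q - W * C * Q"
  have QA: "Q * A \<in> carrier_mat d d" using Q A by simp
  have G: "G \<in> carrier_mat d p" unfolding G_def using Q A W by simp
  have GC: "G * C \<in> carrier_mat d d" using G C by simp
  have WCQ: "W * C * Q \<in> carrier_mat d d" using W C Q by simp
  have CQ: "C * Q \<in> carrier_mat p d" using C Q by simp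
  have M: "M \<in> carrier_mat d d" unfolding M_def using QA GC by simp
  have U: "U \<in> carrier_mat d d" unfolding U_def by (rule QA)
  have V: "V \<in> carrier_mat d d" unfolding V_def using WCQ by (rule minus_carrier_mat)
  have QQA: "Q * (Q * A) = Q * A" using assoc_mult_mat[OF Q Q A] QQ by simp
  have QG: "Q * G = G" unfolding G_def using assoc_mult_mat[OF Q QA W] QQA by simp
  have QM: "Q * M = M"
  proof -
    have "Q * M = Q * (Q * A) - Q * (G * C)" unfolding M_def by (rule mult_minus_distrib_mat[OF Q QA GC])
    also have "Q * (G * C) = G * C" using assoc_mult_mat[OF Q G C] QG by simp
    finally show ?thesis unfolding M_def QQA .
  qed
  have MQ: "M * Q = U * V"
  proof -
    have "M * Q = Q * A * Q - G * C * Q" unfolding M_def by (rule minus_mult_distrib_mat[OF QA GC Q])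
    also have "G * C * Q = Q * A * (W * C * Q)"
      unfolding G_def using assoc_mult_mat[OF G C Q, unfolded G_def] assoc_mult_mat[OF QA W CQ]
        assoc_mult_mat[OF W C Q] by simp
    also have "Q * A * Q - Q * A * (W * C * Q) = U * V" unfolding U_def V_def
      by (rule mult_minus_distrib_mat[OF QA Q WCQ, symmetric])
    finally show ?thesis .
  qed
  have "M ^\<^sub>m Suc q * Q = (M * Q) ^\<^sub>m Suc q" by (rule pow_mat_Suc_mult_absorbing[OF Q M QM])
  also have "\<dots> = U * (V * U) ^\<^sub>m q * V" unfolding MQ
    by (rule pow_mat_Suc_mult_swap[OF U V])
  finally show ?thesis unfolding M_def G_def U_def V_def .
qed

text \<open>The gain \<open>Q A (R + G')\<close> lifts a gain \<open>G'\<close> for the pair projected by \<open>Q' = Q - R C Q\<close>: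
  with \<open>V = Q - (R + G') C Q\<close> one has \<open>V Q A = Q' A - G' C Q A\<close> and \<open>V = Q' - G' C Q\<close>.\<close>

lemma deadbeat_gain_lift:
  fixes A Q C R G' :: "real mat"
  assumes A: "A \<in> carrier_mat d d" and Q: "Q \<in> carrier_mat d d" and C: "C \<in> carrier_mat p d"
    and R: "R \<in> carrier_mat d p" and G': "G' \<in> carrier_mat d p"
    and QQ: "Q * Q = Q" and Q'_def: "Q' = Q - R * (C * Q)"
    and Q'G': "Q' * G' = G'" and nil': "(Q' * A - G' * (C * Q * A)) ^\<^sub>m q * Q' = 0\<^sub>m d d"
  shows "(Q * A - Q * A * (R + G') * C) ^\<^sub>m Suc q * Q = 0\<^sub>m d d"
proof -
  define W where "W = R + G'"
  define V where "V = Q - W * C * Q"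
  define M' where "M' = Q' * A - G' * (C * Q * A)"
  have W: "W \<in> carrier_mat d p" unfolding W_def using R G' by simp
  have QA: "Q * A \<in> carrier_mat d d" using Q A by simp
  have CQ: "C * Q \<in> carrier_mat p d" using C Q by simp
  have CQA: "C * (Q * A) \<in> carrier_mat p d" using C QA by simp
  have WCQ: "W * C * Q \<in> carrier_mat d d" using W C Q by simp
  have Q': "Q' \<in> carrier_mat d d" unfolding Q'_def using Q R C by simp
  have M': "M' \<in> carrier_mat d d" unfolding M'_def using Q' A G' C Q by simp
  have QQA: "Q * (Q * A) = Q * A" using assoc_mult_mat[OF Q Q A] QQ by simp
  have VQA: "V * (Q * A) = M'"
  proof -
    have "V * (Q * A) = Q * (Q * A) - W * C * Q * (Q * A)" unfolding V_def
      by (rule minus_mult_distrib_mat[OF Q WCQ QA])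
    also have "W * C * Q * (Q * A) = W * (C * (Q * A))"
      using assoc_mult_mat[OF WCQ Q A] assoc_mult_mat[OF W C Q] assoc_mult_mat[OF W C QA] QQA
        assoc_mult_mat[OF W CQ QA] assoc_mult_mat[OF C Q QA] by simp
    also have "\<dots> = R * (C * (Q * A)) + G' * (C * (Q * A))" unfolding W_def
      by (rule add_mult_distrib_mat[OF R G' CQA])
    finally have VU: "V * (Q * A) = Q * A - (R * (C * (Q * A)) + G' * (C * (Q * A)))"
      unfolding QQA .
    have "M' = Q * A - R * (C * Q) * A - G' * (C * (Q * A))" unfolding M'_def Q'_def
      using minus_mult_distrib_mat[OF Q _ A, of "R * (C * Q)"] R CQ assoc_mult_mat[OF C Q A] by simp
    also have "R * (C * Q) * A = R * (C * (Q * A))"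
      using assoc_mult_mat[OF R CQ A] assoc_mult_mat[OF C Q A] by simp
    finally show ?thesis unfolding VU
      by (rule sym[OF trans[OF _ minus_plus_mat[symmetric]]])
        (use QA R CQA G' in \<open>auto intro: mult_carrier_mat\<close>)
  qed
  have M'V: "M' ^\<^sub>m q * V = 0\<^sub>m d d"
  proof -
    have GCQ: "G' * (C * Q) \<in> carrier_mat d d" using G' CQ by simp
    have RCQ: "R * (C * Q) \<in> carrier_mat d d" using R CQ by simp
    have "W * C * Q = R * (C * Q) + G' * (C * Q)"
      unfolding W_def assoc_mult_mat[OF W[unfolded W_def] C Q] by (rule add_mult_distrib_mat[OF R G' CQ])
    hence V: "V = Q' - G' * (C * Q)" unfolding V_def Q'_def using minus_plus_mat[OF Q RCQ GCQ] by simp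
    have Pq: "M' ^\<^sub>m q \<in> carrier_mat d d" using M' by simp
    have "M' ^\<^sub>m q * V = M' ^\<^sub>m q * Q' - M' ^\<^sub>m q * (G' * (C * Q))" unfolding V
      by (rule mult_minus_distrib_mat[OF Pq Q' GCQ])
    also have "M' ^\<^sub>m q * (G' * (C * Q)) = M' ^\<^sub>m q * Q' * G' * (C * Q)"
      using assoc_mult_mat[OF Pq G' CQ] assoc_mult_mat[OF Pq Q' G'] Q'G' by simp
    also have "\<dots> = 0\<^sub>m d d" using nil'[folded M'_def] G' CQ by (simp add: left_mult_zero_mat)
    finally show ?thesis using nil'[folded M'_def] by simp
  qed
  have VC: "V \<in> carrier_mat d d" unfolding V_def using WCQ Q by simp
  have "(Q * A - Q * A * W * C) ^\<^sub>m Suc q * Q = Q * A * (M' ^\<^sub>m q) * V"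
    using closed_loop_pow_factor[OF A Q C W QQ, of q] unfolding V_def[symmetric] VQA .
  also have "\<dots> = Q * A * (M' ^\<^sub>m q * V)" by (rule assoc_mult_mat[OF QA _ VC]) (use M' in simp)
  also have "\<dots> = 0\<^sub>m d d" unfolding M'V using QA by (rule right_mult_zero_mat)
  finally show ?thesis unfolding W_def .
qed

lemma relative_deadbeat_gain:
  fixes A :: "real mat"
  assumes A: "A \<in> carrier_mat d d"
  shows "Q \<in> carrier_mat d d \<Longrightarrow> Q * Q = Q \<Longrightarrow> C \<in> carrier_mat p d \<Longrightarrow> observable_on Q A C d m \<Longrightarrow>
    \<exists>G\<in>carrier_mat d p. \<exists>q. Q * G = G \<and> (Q * A - G * C) ^\<^sub>m q * Q = 0\<^sub>m d d"
proof (induction m arbitrary: p Q C)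
  case 0
  note Q = "0.prems"(1) and QQ = "0.prems"(2) and C = "0.prems"(3) and obs = "0.prems"(4)
  have "Q = 0\<^sub>m d d"
  proof (rule mat_eq_by_mult_vec[OF Q])
    fix x :: "real vec" assume x: "x \<in> carrier_vec d"
    have "Q *\<^sub>v (Q *\<^sub>v x) = Q *\<^sub>v x" using assoc_mult_mat_vec[OF Q Q x] QQ by simp
    thus "Q *\<^sub>v x = 0\<^sub>m d d *\<^sub>v x" using obs Q x unfolding observable_on_def by simp
  qed simp
  thus ?case using Q C A by (intro bexI[of _ "0\<^sub>m d p"] exI[of _ 0]) auto
next
  case (Suc m)
  note Q = Suc.prems(1) and QQ = Suc.prems(2) and C = Suc.prems(3) and obs = Suc.prems(4)
  obtain R where R: "R \<in> carrier_mat d p"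
    and QQ': "Q * (Q - R * (C * Q)) = Q - R * (C * Q)"
    and Q'Q': "(Q - R * (C * Q)) * (Q - R * (C * Q)) = Q - R * (C * Q)"
    and CQ': "C * (Q - R * (C * Q)) = 0\<^sub>m p d"
    using kernel_projection_exists[OF Q QQ C] .
  have Q': "Q - R * (C * Q) \<in> carrier_mat d d" using Q R C by simp
  have CQA: "C * Q * A \<in> carrier_mat p d" using C Q A by simp
  obtain G' q where G': "G' \<in> carrier_mat d p" and Q'G': "(Q - R * (C * Q)) * G' = G'"
    and nil': "((Q - R * (C * Q)) * A - G' * (C * Q * A)) ^\<^sub>m q * (Q - R * (C * Q)) = 0\<^sub>m d d"
    using Suc.IH[OF Q' Q'Q' CQA observable_on_kernel_projection[OF A Q C R refl QQ' CQ' obs]]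
    by auto
  have W: "R + G' \<in> carrier_mat d p" using R G' by simp
  hence "Q * A * (R + G') \<in> carrier_mat d p" using Q A by simp
  moreover have "Q * (Q * A * (R + G')) = Q * A * (R + G')"
    using assoc_mult_mat[OF Q _ W, of "Q * A"] assoc_mult_mat[OF Q Q A] QQ Q A by simp
  ultimately show ?case using deadbeat_gain_lift[OF A Q C R G' QQ refl Q'G' nil'] by blast
qed

lemma deadbeat_gain_exists:
  fixes A C :: "real mat"
  assumes A: "A \<in> carrier_mat d d" and C: "C \<in> carrier_mat p d" and obs: "observable_pair A C d"
  shows "\<exists>G\<in>carrier_mat d p. nilpotent_mat (A - G * C) d"
proof -
  have I: "(1\<^sub>m d :: real mat) \<in> carrier_mat d d" by simp
  have II: "(1\<^sub>m d :: real mat) * 1\<^sub>m d = 1\<^sub>m d" by simp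
  have "observable_on (1\<^sub>m d) A C d d" using obs A unfolding observable_on_def observable_pair_def by simp
  then obtain G q where G: "G \<in> carrier_mat d p" and nil: "(1\<^sub>m d * A - G * C) ^\<^sub>m q * 1\<^sub>m d = 0\<^sub>m d d"
    using relative_deadbeat_gain[OF A I II C] by blast
  have M: "A - G * C \<in> carrier_mat d d" using A G C by simp
  have "(A - G * C) ^\<^sub>m q = 0\<^sub>m d d"
    using nil A right_mult_one_mat[OF pow_carrier_mat[OF M, of q]] by simp
  thus ?thesis using G unfolding nilpotent_mat_def by blast
qed

lemma foldr_add_vec_eq_vec: "foldr (\<lambda>q acc. f q + acc) xs (0\<^sub>v d) = vec d (\<lambda>i. sum_list (map (\<lambda>q. f q $ i) xs))"
  by (induction xs) (auto intro!: eq_vecI)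

lemma vsum_eq_vec: "vsum d f m = vec d (\<lambda>i. \<Sum>q<m. f q $ i)"
  unfolding vsum_def foldr_add_vec_eq_vec
  by (simp add: sum_set_upt_conv_sum_list_nat[symmetric] atLeast0LessThan)

lemma vsum_carrier[simp]: "vsum d f m \<in> carrier_vec d"
  unfolding vsum_eq_vec by simp

lemma vsum_dim[simp]: "dim_vec (vsum d f m) = d"
  unfolding vsum_eq_vec by simp

lemma vsum_nth: "i < d \<Longrightarrow> vsum d f m $ i = (\<Sum>q<m. f q $ i)"
  unfolding vsum_eq_vec by simp

lemma vsum_cong: "(\<And>q. q < m \<Longrightarrow> f q = g q) \<Longrightarrow> vsum d f m = vsum d g m"
  unfolding vsum_eq_vec by (intro eq_vecI) auto

lemma mult_mat_vec_vsum:
  assumes M: "M \<in> carrier_mat r d" and f: "\<And>q. q < m \<Longrightarrow> f q \<in> carrier_vec d"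
  shows "M *\<^sub>v vsum d f m = vsum r (\<lambda>q. M *\<^sub>v f q) m"
proof (rule eq_vecI)
  show "dim_vec (M *\<^sub>v vsum d f m) = dim_vec (vsum r (\<lambda>q. M *\<^sub>v f q) m)" using M by simp
  fix i assume "i < dim_vec (vsum r (\<lambda>q. M *\<^sub>v f q) m)"
  hence i: "i < r" by simp
  have "(M *\<^sub>v vsum d f m) $ i = (\<Sum>c<d. M $$ (i,c) * (\<Sum>q<m. f q $ c))"
    using M i by (simp add: scalar_prod_def vsum_nth atLeast0LessThan)
  also have "\<dots> = (\<Sum>q<m. \<Sum>c<d. M $$ (i,c) * f q $ c)"
    by (simp add: sum_distrib_left sum.swap[of _ "{..<d}"])
  also have "\<dots> = (\<Sum>q<m. (M *\<^sub>v f q) $ i)"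
  proof (intro sum.cong refl)
    fix q assume "q \<in> {..<m}"
    hence fq: "f q \<in> carrier_vec d" using f by simp
    show "(\<Sum>c<d. M $$ (i,c) * f q $ c) = (M *\<^sub>v f q) $ i"
      using M i fq by (simp add: scalar_prod_def atLeast0LessThan)
  qed
  also have "\<dots> = vsum r (\<lambda>q. M *\<^sub>v f q) m $ i" using i by (simp add: vsum_nth)
  finally show "(M *\<^sub>v vsum d f m) $ i = vsum r (\<lambda>q. M *\<^sub>v f q) m $ i" .
qed

lemma observer_error_step:
  fixes Aq Cq :: "nat \<Rightarrow> real mat" and zq :: "nat \<Rightarrow> real vec" and n :: "nat \<Rightarrow> nat"
  assumes Aq: "\<And>q. q \<le> j \<Longrightarrow> Aq q \<in> carrier_mat d (n q)"
    and Cq: "\<And>q. q \<le> j \<Longrightarrow> Cq q \<in> carrier_mat p (n q)"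
    and zq: "\<And>q. q \<le> j \<Longrightarrow> zq q \<in> carrier_vec (n q)"
    and nj: "n j = d" and Lm: "Lm \<in> carrier_mat d p" and a: "a \<in> carrier_vec d"
  shows "(Aq j - Lm * Cq j) *\<^sub>v a + vsum d (\<lambda>q. (Aq q - Lm * Cq q) *\<^sub>v zq q) j
           + Lm *\<^sub>v vsum p (\<lambda>q. Cq q *\<^sub>v zq q) (Suc j)
         - (Aq j *\<^sub>v zq j + vsum d (\<lambda>q. Aq q *\<^sub>v zq q) j)
         = (Aq j - Lm * Cq j) *\<^sub>v (a - zq j)"
proof -
  have Aj: "Aq j \<in> carrier_mat d d" using Aq[of j] nj by simp
  have Cj: "Cq j \<in> carrier_mat p d" using Cq[of j] nj by simp
  have zj: "zq j \<in> carrier_vec d" using zq[of j] nj by simp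
  have M: "Aq j - Lm * Cq j \<in> carrier_mat d d" using Aj Lm Cj by simp
  have e1: "vsum d (\<lambda>q. (Aq q - Lm * Cq q) *\<^sub>v zq q) j = vsum d (\<lambda>q. Aq q *\<^sub>v zq q - Lm *\<^sub>v (Cq q *\<^sub>v zq q)) j"
  proof (rule vsum_cong)
    fix q assume "q < j"
    thus "(Aq q - Lm * Cq q) *\<^sub>v zq q = Aq q *\<^sub>v zq q - Lm *\<^sub>v (Cq q *\<^sub>v zq q)"
      using minus_mult_mat_mult_vec[OF Aq[of q] Lm Cq[of q] zq[of q]] by simp
  qed
  have e2: "Lm *\<^sub>v vsum p (\<lambda>q. Cq q *\<^sub>v zq q) (Suc j) = vsum d (\<lambda>q. Lm *\<^sub>v (Cq q *\<^sub>v zq q)) (Suc j)"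
  proof (rule mult_mat_vec_vsum[OF Lm])
    fix q assume "q < Suc j"
    thus "Cq q *\<^sub>v zq q \<in> carrier_vec p" using mult_mat_vec_carrier[OF Cq[of q] zq[of q]] by simp
  qed
  have e3: "(Aq j - Lm * Cq j) *\<^sub>v (a - zq j) = (Aq j - Lm * Cq j) *\<^sub>v a - (Aq j *\<^sub>v zq j - Lm *\<^sub>v (Cq j *\<^sub>v zq j))"
    using mult_minus_distrib_mat_vec[OF M a zj] minus_mult_mat_mult_vec[OF Aj Lm Cj zj] by simp
  show ?thesis unfolding e1 e2 e3
  proof (rule eq_vecI)
    fix i assume "i < dim_vec ((Aq j - Lm * Cq j) *\<^sub>v a - (Aq j *\<^sub>v zq j - Lm *\<^sub>v (Cq j *\<^sub>v zq j)))"
    hence i: "i < d" using Aj Lm by simp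
    show "((Aq j - Lm * Cq j) *\<^sub>v a + vsum d (\<lambda>q. Aq q *\<^sub>v zq q - Lm *\<^sub>v (Cq q *\<^sub>v zq q)) j
           + vsum d (\<lambda>q. Lm *\<^sub>v (Cq q *\<^sub>v zq q)) (Suc j)
         - (Aq j *\<^sub>v zq j + vsum d (\<lambda>q. Aq q *\<^sub>v zq q) j)) $ i
        = ((Aq j - Lm * Cq j) *\<^sub>v a - (Aq j *\<^sub>v zq j - Lm *\<^sub>v (Cq j *\<^sub>v zq j))) $ i"
      using i Aj Lm Cj zj Aq Lm
      by (simp add: vsum_nth sum_subtractf index_minus_vec)
  qed (use Aj Lm in simp)
qed

section \<open>Propagation of freshness indices\<close>

lemma rtrancl_exits_set:
  assumes "(x, y) \<in> R\<^sup>*" and "x \<in> S" and "y \<notin> S"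
  shows "\<exists>a c. (a, c) \<in> R \<and> a \<in> S \<and> c \<notin> S"
  using assms by (induction rule: rtrancl_induct) blast+

locale freshness_run =
  fixes N :: nat and nd pd :: "nat \<Rightarrow> nat" and Ab Cb :: "nat \<Rightarrow> nat \<Rightarrow> real mat"
    and L :: "nat \<Rightarrow> real mat" and E :: "nat \<Rightarrow> (nat \<times> nat) set"
    and z :: "nat \<Rightarrow> nat \<Rightarrow> real vec" and tau :: "nat \<Rightarrow> nat \<Rightarrow> nat \<Rightarrow> nat option"
    and zh :: "nat \<Rightarrow> nat \<Rightarrow> nat \<Rightarrow> real vec"
  assumes run: "fi_run N nd pd Ab Cb L E z tau zh"
begin

lemma tau_source: "j < N \<Longrightarrow> tau k j j = Some 0"
  using run unfolding fi_run_def by (cases k) auto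

lemma tau_init: "i < N \<Longrightarrow> j < N \<Longrightarrow> i \<noteq> j \<Longrightarrow> tau 0 i j = None"
  using run unfolding fi_run_def by auto

lemmas nonsource_update =
  run[unfolded fi_run_def, THEN conjunct2, THEN conjunct2, THEN conjunct2, THEN conjunct2, rule_format]

lemma nonsource_step_unknown:
  assumes i: "i < N" and j: "j < N" and ij: "i \<noteq> j" and None: "tau k i j = None"
  obtains (unknown) "\<forall>l\<in>insert i (nbrs N E k i). tau k l j = None" "tau (Suc k) i j = None"
      "zh (Suc k) i j = Ab j j *\<^sub>v zh k i j + vsum (nd j) (\<lambda>q. Ab j q *\<^sub>v zh k i q) j"
  | (known) u s where "u \<in> insert i (nbrs N E k i)" "tau k u j = Some s"
      "\<forall>l\<in>insert i (nbrs N E k i). \<forall>s'. tau k l j = Some s' \<longrightarrow> s \<le> s'"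
      "tau (Suc k) i j = Some (Suc s)"
      "zh (Suc k) i j = Ab j j *\<^sub>v zh k u j + vsum (nd j) (\<lambda>q. Ab j q *\<^sub>v zh k i q) j"
proof -
  define M where "M = {l \<in> nbrs N E k i. tau k l j \<noteq> None}"
  define adopt where "adopt u = Ab j j *\<^sub>v zh k u j + vsum (nd j) (\<lambda>q. Ab j q *\<^sub>v zh k i q) j" for u
  have upd: "if M \<noteq> {} then
      (\<exists>u\<in>M. (\<forall>l\<in>M. the (tau k u j) \<le> the (tau k l j)) \<and>
             tau (Suc k) i j = Some (the (tau k u j) + 1) \<and> zh (Suc k) i j = adopt u)
    else tau (Suc k) i j = None \<and> zh (Suc k) i j = adopt i"
    using nonsource_update[OF i j ij, where k = k] None unfolding M_def adopt_def Let_def by simp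
  show thesis
  proof (cases "M = {}")
    case True
    show ?thesis
    proof (rule unknown)
      show "\<forall>l\<in>insert i (nbrs N E k i). tau k l j = None" using True None unfolding M_def by auto
      show "tau (Suc k) i j = None" using upd True by simp
      show "zh (Suc k) i j = Ab j j *\<^sub>v zh k i j + vsum (nd j) (\<lambda>q. Ab j q *\<^sub>v zh k i q) j"
        using upd True by (simp add: adopt_def)
    qed
  next
    case False
    then obtain u where u: "u \<in> M" and min: "\<forall>l\<in>M. the (tau k u j) \<le> the (tau k l j)"
      and tu: "tau (Suc k) i j = Some (the (tau k u j) + 1)" and zu: "zh (Suc k) i j = adopt u"
      using upd by auto
    obtain s where s: "tau k u j = Some s" using u unfolding M_def by auto
    have least: "\<forall>l\<in>insert i (nbrs N E k i). \<forall>s'. tau k l j = Some s' \<longrightarrow> s \<le> s'"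
    proof (intro ballI allI impI)
      fix l s' assume l: "l \<in> insert i (nbrs N E k i)" and s': "tau k l j = Some s'"
      hence "l \<in> M" using None unfolding M_def by auto
      thus "s \<le> s'" using min s s' by fastforce
    qed
    have "u \<in> insert i (nbrs N E k i)" using u unfolding M_def by simp
    then show ?thesis by (rule known[of u s]) (use s least tu zu in \<open>auto simp: adopt_def\<close>)
  qed
qed

lemma nonsource_step_known:
  assumes i: "i < N" and j: "j < N" and ij: "i \<noteq> j" and Some: "tau k i j = Some t"
  obtains u s where "u \<in> insert i (nbrs N E k i)" "tau k u j = Some s"
      "\<forall>l\<in>insert i (nbrs N E k i). \<forall>s'. tau k l j = Some s' \<longrightarrow> s \<le> s'"
      "tau (Suc k) i j = Some (Suc s)"
      "zh (Suc k) i j = Ab j j *\<^sub>v zh k u j + vsum (nd j) (\<lambda>q. Ab j q *\<^sub>v zh k i q) j"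
proof -
  define M where "M = {l \<in> nbrs N E k i. tau k l j \<noteq> None}"
  define F where "F = {l \<in> M. the (tau k l j) < t}"
  define adopt where "adopt u = Ab j j *\<^sub>v zh k u j + vsum (nd j) (\<lambda>q. Ab j q *\<^sub>v zh k i q) j" for u
  have upd: "if F \<noteq> {} then
      (\<exists>u\<in>F. (\<forall>l\<in>F. the (tau k u j) \<le> the (tau k l j)) \<and>
             tau (Suc k) i j = Some (the (tau k u j) + 1) \<and> zh (Suc k) i j = adopt u)
    else tau (Suc k) i j = Some (t + 1) \<and> zh (Suc k) i j = adopt i"
    using nonsource_update[OF i j ij, where k = k] Some unfolding F_def M_def adopt_def Let_def by simp
  show thesis
  proof (cases "F = {}")
    case True
    have least: "\<forall>l\<in>insert i (nbrs N E k i). \<forall>s'. tau k l j = Some s' \<longrightarrow> t \<le> s'"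
      using True Some unfolding F_def M_def by (auto simp: not_less)
    show ?thesis by (rule that[of i t]) (use Some least upd True in \<open>simp_all add: adopt_def\<close>)
  next
    case False
    then obtain u where u: "u \<in> F" and min: "\<forall>l\<in>F. the (tau k u j) \<le> the (tau k l j)"
      and tu: "tau (Suc k) i j = Some (the (tau k u j) + 1)" and zu: "zh (Suc k) i j = adopt u"
      using upd by auto
    obtain s where s: "tau k u j = Some s" and st: "s < t" using u unfolding F_def M_def by auto
    have least: "\<forall>l\<in>insert i (nbrs N E k i). \<forall>s'. tau k l j = Some s' \<longrightarrow> s \<le> s'"
    proof (intro ballI allI impI)
      fix l s' assume l: "l \<in> insert i (nbrs N E k i)" and s': "tau k l j = Some s'"
      show "s \<le> s'"
      proof (cases "s' < t")
        case True
        hence "l \<in> F" using l s' Some ij unfolding F_def M_def by auto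
        thus ?thesis using min s s' by force
      next
        case False thus ?thesis using st by simp
      qed
    qed
    have "u \<in> insert i (nbrs N E k i)" using u unfolding F_def M_def by simp
    then show ?thesis by (rule that[of u s]) (use s least tu zu in \<open>auto simp: adopt_def\<close>)
  qed
qed

text \<open>The open-loop update appears as adoption from \<open>i\<close> itself.\<close>

lemma nonsource_step:
  assumes i: "i < N" and j: "j < N" and ij: "i \<noteq> j"
  obtains (unknown) "\<forall>l\<in>insert i (nbrs N E k i). tau k l j = None" "tau (Suc k) i j = None"
      "zh (Suc k) i j = Ab j j *\<^sub>v zh k i j + vsum (nd j) (\<lambda>q. Ab j q *\<^sub>v zh k i q) j"
  | (known) u s where "u \<in> insert i (nbrs N E k i)" "tau k u j = Some s"
      "\<forall>l\<in>insert i (nbrs N E k i). \<forall>s'. tau k l j = Some s' \<longrightarrow> s \<le> s'"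
      "tau (Suc k) i j = Some (Suc s)"
      "zh (Suc k) i j = Ab j j *\<^sub>v zh k u j + vsum (nd j) (\<lambda>q. Ab j q *\<^sub>v zh k i q) j"
proof (cases "tau k i j")
  case None
  then show thesis using unknown known by (rule nonsource_step_unknown[OF i j ij])
next
  case (Some t)
  then show thesis using known by (rule nonsource_step_known[OF i j ij])
qed

text \<open>Node \<open>i\<close> holds, at time \<open>k\<close>, information on substate \<open>j\<close> that left the source no earlier
  than time \<open>m\<close>.\<close>

definition informed :: "nat \<Rightarrow> nat \<Rightarrow> nat \<Rightarrow> nat \<Rightarrow> bool" where
  "informed j m k i \<longleftrightarrow> (\<exists>t. tau k i j = Some t \<and> t + m \<le> k)"

lemma informed_source: "j < N \<Longrightarrow> m \<le> k \<Longrightarrow> informed j m k j"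
  using tau_source unfolding informed_def by auto

lemma informed_Suc:
  assumes j: "j < N" and i: "i < N" and l: "l \<in> insert i (nbrs N E k i)" and inf: "informed j m k l"
  shows "informed j m (Suc k) i"
proof (cases "i = j")
  case True
  then show ?thesis using inf tau_source[OF j] unfolding informed_def by auto
next
  case False
  obtain t where t: "tau k l j = Some t" "t + m \<le> k" using inf unfolding informed_def by auto
  show ?thesis
  proof (rule nonsource_step[OF i j False, of k])
    assume "\<forall>l\<in>insert i (nbrs N E k i). tau k l j = None"
    then show ?thesis using l t by auto
  next
    fix u s assume least: "\<forall>l\<in>insert i (nbrs N E k i). \<forall>s'. tau k l j = Some s' \<longrightarrow> s \<le> s'"
      and tau_Suc: "tau (Suc k) i j = Some (Suc s)"
    have "s \<le> t" using least l t(1) by blast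
    then show ?thesis using tau_Suc t(2) unfolding informed_def by auto
  qed
qed

lemma informed_mono:
  assumes j: "j < N" and i: "i < N" and inf: "informed j m k i" and kk: "k \<le> k'"
  shows "informed j m k' i"
  using kk by (induction k' rule: dec_induct) (use inf informed_Suc[OF j i] in auto)

text \<open>The union graph over the window starting at \<open>v T\<close> is strongly connected, so one of its
  edges leaves the set of informed nodes.\<close>

lemma informed_spreads:
  assumes conn: "joint_strong_conn N E T" and j: "j < N"
    and b: "b < N" "\<not> informed j m (v * T) b" and m: "m \<le> v * T"
  obtains c where "c < N" "\<not> informed j m (v * T) c" "informed j m ((v + 1) * T) c"
proof -
  define S where "S = {i. i < N \<and> informed j m (v * T) i}"
  have jS: "j \<in> S" unfolding S_def using informed_source[OF j m] j by simp
  have bS: "b \<notin> S" unfolding S_def using b by simp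
  have "union_strongly_connected N E {v * T ..< (v + 1) * T}"
    using conn unfolding joint_strong_conn_def by blast
  then have "(j, b) \<in> ((\<Union>k\<in>{v * T ..< (v + 1) * T}. E k) \<inter> ({..<N} \<times> {..<N}))\<^sup>*"
    using j b unfolding union_strongly_connected_def by auto
  then obtain a c where ac: "(a, c) \<in> (\<Union>k\<in>{v * T ..< (v + 1) * T}. E k) \<inter> ({..<N} \<times> {..<N})"
    and aS: "a \<in> S" and cS: "c \<notin> S"
    using rtrancl_exits_set[OF _ jS bS] by blast
  then obtain k' where k': "v * T \<le> k'" "k' < (v + 1) * T" and e: "(a, c) \<in> E k'"
    and a: "a < N" and c: "c < N" by auto
  have "a \<in> nbrs N E k' c" unfolding nbrs_def using a e aS cS by auto
  moreover have "informed j m k' a" using informed_mono[OF j a _ k'(1)] aS unfolding S_def by simp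
  ultimately have "informed j m (Suc k') c" using informed_Suc[OF j c] by blast
  then have "informed j m ((v + 1) * T) c" by (rule informed_mono[OF j c]) (use k'(2) in simp)
  then show thesis using that c cS unfolding S_def by simp
qed

lemma card_informed:
  assumes conn: "joint_strong_conn N E T" and j: "j < N"
  shows "min N (Suc r) \<le> card {i. i < N \<and> informed j (w * T) ((w + r) * T) i}"
proof (induction r)
  case 0
  have "j \<in> {i. i < N \<and> informed j (w * T) ((w + 0) * T) i}" using informed_source[OF j] j by simp
  then have "0 < card {i. i < N \<and> informed j (w * T) ((w + 0) * T) i}" by (auto simp: card_gt_0_iff)
  then show ?case by simp
next
  case (Suc r)
  define S where "S = {i. i < N \<and> informed j (w * T) ((w + r) * T) i}"
  define S' where "S' = {i. i < N \<and> informed j (w * T) ((w + Suc r) * T) i}"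
  have finS': "finite S'" unfolding S'_def by simp
  have SS': "S \<subseteq> S'" unfolding S_def S'_def using informed_mono[OF j] by auto
  show ?case
  proof (cases "N \<le> card S")
    case True
    then show ?thesis using card_mono[OF finS' SS'] unfolding S'_def by simp
  next
    case False
    have "\<not> {..<N} \<subseteq> S"
    proof
      assume "{..<N} \<subseteq> S"
      hence "card {..<N} \<le> card S" by (rule card_mono[rotated]) (simp add: S_def)
      thus False using False by simp
    qed
    then obtain b where "b < N" "\<not> informed j (w * T) ((w + r) * T) b" unfolding S_def by auto
    then obtain c where c: "c < N" "c \<notin> S" "c \<in> S'"
      by (rule informed_spreads[OF conn j, where v = "w + r"]) (auto simp: S_def S'_def)
    hence "card (insert c S) \<le> card S'" using card_mono[OF finS'] SS' by blast
    moreover have "card (insert c S) = Suc (card S)" using c(2) by (simp add: S_def)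
    moreover have "min N (Suc r) \<le> card S" using Suc.IH unfolding S_def .
    ultimately show ?thesis unfolding S'_def[symmetric] by linarith
  qed
qed

lemma informed_all:
  assumes conn: "joint_strong_conn N E T" and j: "j < N" and i: "i < N"
  shows "informed j (w * T) ((w + (N - 1)) * T) i"
proof -
  define S where "S = {i. i < N \<and> informed j (w * T) ((w + (N - 1)) * T) i}"
  have "min N (Suc (N - 1)) \<le> card S" unfolding S_def by (rule card_informed[OF conn j])
  hence ge: "card {..<N} \<le> card S" using j by simp
  have sub: "S \<subseteq> {..<N}" unfolding S_def by auto
  hence "card S \<le> card {..<N}" by (intro card_mono) simp_all
  hence "card S = card {..<N}" using ge by simp
  hence "S = {..<N}" by (rule card_subset_eq[OF _ sub, rotated]) simp
  thus ?thesis using i unfolding S_def by auto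
qed

lemma tau_bounded:
  assumes conn: "joint_strong_conn N E T" and j: "j < N" and i: "i < N" and k: "(N - 1) * T \<le> k"
  shows "\<exists>t. tau k i j = Some t \<and> t < N * T"
proof -
  have T: "T \<ge> 1" using conn unfolding joint_strong_conn_def by auto
  define w where "w = k div T - (N - 1)"
  have "N - 1 \<le> k div T" using div_le_mono[OF k, of T] T by simp
  hence "w + (N - 1) = k div T" unfolding w_def by simp
  hence wk: "(w + (N - 1)) * T = (k div T) * T" by simp
  have "k = (k div T) * T + k mod T" by simp
  moreover have "k mod T < T" using T by simp
  ultimately have "k < (k div T) * T + T" by linarith
  also have "(k div T) * T + T = w * T + N * T" using wk j by (cases N) (auto simp: algebra_simps)
  finally have lt: "k < w * T + N * T" .
  have "(w + (N - 1)) * T \<le> k" unfolding wk by simp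
  hence "informed j (w*T) k i" using informed_mono[OF j i informed_all[OF conn j i, of w]] by simp
  then show ?thesis using lt unfolding informed_def by auto
qed

end

section \<open>Exactness of the estimates\<close>

locale observer_run = freshness_run +
  assumes blocks: "block_system N nd pd Ab Cb"
    and gains: "gains_ok N nd pd Ab Cb L"
    and traj: "true_traj N nd Ab z"
begin

lemma Ab_carrier: "j < N \<Longrightarrow> q \<le> j \<Longrightarrow> Ab j q \<in> carrier_mat (nd j) (nd q)"
  using blocks unfolding block_system_def by auto

lemma Cb_carrier: "j < N \<Longrightarrow> q \<le> j \<Longrightarrow> Cb j q \<in> carrier_mat (pd j) (nd q)"
  using blocks unfolding block_system_def by auto

lemma L_carrier: "j < N \<Longrightarrow> L j \<in> carrier_mat (nd j) (pd j)"
  using gains unfolding gains_ok_def by auto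

lemma z_Suc: "j < N \<Longrightarrow> z (Suc k) j = Ab j j *\<^sub>v z k j + vsum (nd j) (\<lambda>q. Ab j q *\<^sub>v z k q) j"
  using traj unfolding true_traj_def by auto

lemma z_carrier: "j < N \<Longrightarrow> z k j \<in> carrier_vec (nd j)"
  using traj z_Suc by (cases k) (auto simp: true_traj_def intro: carrier_vecI)

lemma zh_source_Suc: "j < N \<Longrightarrow> zh (Suc k) j j = (Ab j j - L j * Cb j j) *\<^sub>v zh k j j
    + vsum (nd j) (\<lambda>q. (Ab j q - L j * Cb j q) *\<^sub>v zh k j q) j + L j *\<^sub>v meas_output pd Cb z k j"
  using run unfolding fi_run_def by auto

lemma zh_carrier:
  assumes i: "i < N" and j: "j < N"
  shows "zh k i j \<in> carrier_vec (nd j)"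
proof (cases k)
  case 0 then show ?thesis using run i j unfolding fi_run_def by auto
next
  case (Suc k')
  show ?thesis
  proof (cases "i = j")
    case True
    then show ?thesis using Suc zh_source_Suc[OF j, of k'] L_carrier[OF j] by (intro carrier_vecI) simp
  next
    case False
    show ?thesis unfolding Suc by (rule nonsource_step[OF i j False, of k']) (auto intro: carrier_vecI)
  qed
qed

text \<open>Induction along the chain of adoptions: each one applies the dynamics to exact data.\<close>

lemma nonsource_exact:
  assumes j: "j < N" and lower: "\<And>q i s. q < j \<Longrightarrow> i < N \<Longrightarrow> K \<le> s \<Longrightarrow> zh s i q = z s q"
  shows "i < N \<Longrightarrow> tau k i j = Some t \<Longrightarrow> K + t \<le> k \<Longrightarrow> zh (k - t) j j = z (k - t) j \<Longrightarrow>
    zh k i j = z k j"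
proof (induction k arbitrary: i t)
  case 0
  then have "i = j" using tau_init[OF _ j] by (cases "i = j") auto
  then show ?case using 0 by simp
next
  case (Suc k)
  show ?case
  proof (cases "i = j")
    case True
    then show ?thesis using tau_source[OF j] Suc.prems by simp
  next
    case False
    show ?thesis
    proof (rule nonsource_step[OF Suc.prems(1) j False, of k])
      assume "tau (Suc k) i j = None"
      then show ?thesis using Suc.prems(2) by simp
    next
      fix u s assume u: "u \<in> insert i (nbrs N E k i)" and tau_u: "tau k u j = Some s"
        and tau_Suc: "tau (Suc k) i j = Some (Suc s)"
        and zh_Suc: "zh (Suc k) i j = Ab j j *\<^sub>v zh k u j + vsum (nd j) (\<lambda>q. Ab j q *\<^sub>v zh k i q) j"
      have "u < N" using u Suc.prems(1) unfolding nbrs_def by auto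
      moreover have ts: "t = Suc s" using tau_Suc Suc.prems(2) by simp
      ultimately have "zh k u j = z k j"
        using Suc.IH[OF _ tau_u] Suc.prems(3,4) by simp
      moreover have "vsum (nd j) (\<lambda>q. Ab j q *\<^sub>v zh k i q) j = vsum (nd j) (\<lambda>q. Ab j q *\<^sub>v z k q) j"
        by (rule vsum_cong) (use lower Suc.prems ts in auto)
      ultimately show ?thesis using zh_Suc z_Suc[OF j] by simp
    qed
  qed
qed

text \<open>Once the lower substates are exact at the source, its estimation error obeys
  \<open>e[k+1] = (A\<^sub>j\<^sub>j - L\<^sub>j C\<^sub>j\<^sub>j) e[k]\<close>.\<close>

lemma source_exact:
  assumes j: "j < N" and lower: "\<And>q s. q < j \<Longrightarrow> K \<le> s \<Longrightarrow> zh s j q = z s q"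
    and k: "K + nd j \<le> k"
  shows "zh k j j = z k j"
proof -
  define M where "M = Ab j j - L j * Cb j j"
  have M: "M \<in> carrier_mat (nd j) (nd j)"
    unfolding M_def using Ab_carrier[OF j] Cb_carrier[OF j] L_carrier[OF j] by simp
  have "nilpotent_mat M (nd j)" using gains j unfolding gains_ok_def M_def by auto
  hence Mn: "M ^\<^sub>m nd j = 0\<^sub>m (nd j) (nd j)" by (rule nilpotent_mat_pow_dim[OF M])
  define e where "e k = zh k j j - z k j" for k
  have e: "e k \<in> carrier_vec (nd j)" for k unfolding e_def using zh_carrier[OF j j] z_carrier[OF j] by simp
  have "e (Suc k) = M *\<^sub>v e k" if k: "K \<le> k" for k
  proof -
    have "vsum (nd j) (\<lambda>q. (Ab j q - L j * Cb j q) *\<^sub>v zh k j q) j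
        = vsum (nd j) (\<lambda>q. (Ab j q - L j * Cb j q) *\<^sub>v z k q) j"
      by (rule vsum_cong) (use lower k in auto)
    then have zh_Suc: "zh (Suc k) j j = M *\<^sub>v zh k j j
        + vsum (nd j) (\<lambda>q. (Ab j q - L j * Cb j q) *\<^sub>v z k q) j
        + L j *\<^sub>v vsum (pd j) (\<lambda>q. Cb j q *\<^sub>v z k q) (Suc j)"
      unfolding zh_source_Suc[OF j] M_def meas_output_def by simp
    show ?thesis unfolding e_def zh_Suc z_Suc[OF j] M_def
      by (rule observer_error_step[of j "Ab j" "nd j" nd "Cb j" "pd j" "z k" "L j" "zh k j j"])
        (use Ab_carrier[OF j] Cb_carrier[OF j] z_carrier j L_carrier[OF j] zh_carrier[OF j j] in auto)
  qed
  then have e0: "e k = 0\<^sub>v (nd j)" by (rule nilpotent_recurrence_vanishes[OF M Mn e _ k])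
  show ?thesis
  proof (rule eq_vecI)
    fix i assume "i < dim_vec (z k j)"
    then have i: "i < nd j" using z_carrier[OF j, of k] by simp
    have "(zh k j j - z k j) $ i = 0" using e0 i unfolding e_def by simp
    then show "zh k j j $ i = z k j $ i" using i z_carrier[OF j, of k] by simp
  qed (use zh_carrier[OF j j, of k] z_carrier[OF j, of k] in simp)
qed

lemma exact_after:
  assumes conn: "joint_strong_conn N E T"
  shows "j < N \<Longrightarrow> i < N \<Longrightarrow> (\<Sum>q\<le>j. nd q) + Suc j * (2 * (N - 1) * T) \<le> k \<Longrightarrow> zh k i j = z k j"
proof (induction j arbitrary: i k rule: less_induct)
  case (less j)
  define D where "D = 2 * (N - 1) * T"
  define K where "K = (\<Sum>q<j. nd q) + j * D"
  have lower: "zh s i q = z s q" if q: "q < j" and i: "i < N" and s: "K \<le> s" for q i s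
  proof -
    have "(\<Sum>q'\<le>q. nd q') \<le> (\<Sum>q'<j. nd q')" by (rule sum_mono2) (use q in auto)
    moreover have "Suc q * D \<le> j * D" using q by (intro mult_le_mono1) simp
    ultimately show ?thesis using less.IH[OF q _ i] q less.prems(1) s unfolding K_def D_def by simp
  qed
  have bound: "K + nd j + D \<le> k"
    using less.prems(3) unfolding K_def D_def lessThan_Suc_atMost[symmetric] by simp
  have source: "zh s j j = z s j" if "K + nd j \<le> s" for s
    using source_exact[OF less.prems(1) lower[OF _ less.prems(1)] that] .
  show ?case
  proof (cases "i = j")
    case True
    then show ?thesis using source bound by simp
  next
    case False
    have "N * T \<le> D" unfolding D_def using less.prems(1,2) False by (intro mult_le_mono1) linarith
    moreover have "(N - 1) * T \<le> D" unfolding D_def by simp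
    then have "(N - 1) * T \<le> k" using bound by linarith
    moreover obtain t where t: "tau k i j = Some t" and "t < N * T"
      using tau_bounded[OF conn less.prems(1,2) \<open>(N - 1) * T \<le> k\<close>] by blast
    ultimately have "t \<le> D" by linarith
    then show ?thesis
      using nonsource_exact[OF less.prems(1) lower less.prems(2) t] source bound by simp
  qed
qed

end

lemma gains_ok_exists:
  assumes "block_system N nd pd Ab Cb"
  shows "\<exists>L. gains_ok N nd pd Ab Cb L"
proof -
  have "\<exists>G. j < N \<longrightarrow> G \<in> carrier_mat (nd j) (pd j) \<and> nilpotent_mat (Ab j j - G * Cb j j) (nd j)" for j
  proof (cases "j < N")
    case True
    have "Ab j j \<in> carrier_mat (nd j) (nd j)" "Cb j j \<in> carrier_mat (pd j) (nd j)"
      "observable_pair (Ab j j) (Cb j j) (nd j)"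
      using assms True unfolding block_system_def by auto
    then show ?thesis using deadbeat_gain_exists by blast
  qed simp
  then have "\<exists>L. \<forall>j. j < N \<longrightarrow> L j \<in> carrier_mat (nd j) (pd j) \<and> nilpotent_mat (Ab j j - L j * Cb j j) (nd j)"
    by (rule choice[OF allI])
  then show ?thesis unfolding gains_ok_def by simp
qed

theorem corollary1:
  fixes N T :: nat and nd pd :: "nat \<Rightarrow> nat"
    and Ab Cb :: "nat \<Rightarrow> nat \<Rightarrow> real mat"
    and E :: "nat \<Rightarrow> (nat \<times> nat) set"
  assumes blocks: "block_system N nd pd Ab Cb"
    and graphs: "joint_strong_conn N E T"
  shows "(\<exists>L. gains_ok N nd pd Ab Cb L) \<and>
         (\<forall>L. gains_ok N nd pd Ab Cb L \<longrightarrow>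
           (\<forall>z tau zh. true_traj N nd Ab z \<and> fi_run N nd pd Ab Cb L E z tau zh \<longrightarrow>
              (\<forall>k i j. k \<ge> (\<Sum>q<N. nd q) + 2 * N * (N - 1) * T \<and> i < N \<and> j < N
                  \<longrightarrow> zh k i j = z k j)))"
proof (intro conjI allI impI)
  show "\<exists>L. gains_ok N nd pd Ab Cb L" using gains_ok_exists[OF blocks] .
next
  fix L z tau zh k i j
  assume "gains_ok N nd pd Ab Cb L" and "true_traj N nd Ab z \<and> fi_run N nd pd Ab Cb L E z tau zh"
    and kij: "(\<Sum>q<N. nd q) + 2 * N * (N - 1) * T \<le> k \<and> i < N \<and> j < N"
  then interpret observer_run N nd pd Ab Cb L E z tau zh
    using blocks by unfold_locales auto
  have "(\<Sum>q\<le>j. nd q) \<le> (\<Sum>q<N. nd q)" by (rule sum_mono2) (use kij in auto)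
  moreover have "Suc j * (2 * (N - 1) * T) \<le> 2 * N * (N - 1) * T"
    using mult_le_mono1[of "Suc j" N "2 * (N - 1) * T"] kij by (simp add: algebra_simps)
  ultimately show "zh k i j = z k j" using exact_after[OF graphs] kij by simp
qed

end
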